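(* Let $k$ be a field, let $X$ be a $\mathcal{T}$-space and let $U\in\mathcal{T}$. Then the full additive subcategory of $\mathcal{T}$-flabby objects of $\mathrm{Mod}(k_\mathcal{T})$ is $\Gamma(U;\bullet)$-injective, namely: (i) for every $F\in\mathrm{Mod}(k_\mathcal{T})$ there exist a $\mathcal{T}$-flabby $F'$ and a monomorphism $F\to F'$; (ii) if $0\to F'\to F\to F''\to0$ is exact in $\mathrm{Mod}(k_\mathcal{T})$ and $F'$ is $\mathcal{T}$-flabby, then $0\to\Gamma(U;F')\to\Gamma(U;F)\to\Gamma(U;F'')\to0$ is exact; (iii) if $0\to F'\to F\to F''\to0$ is exact in $\mathrm{Mod}(k_\mathcal{T})$ and $F'$ is $\mathcal{T}$-flabby, then $F$ is $\mathcal{T}$-flabby if and only if $F''$ is $\mathcal{T}$-flabby.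
   Context: Let $X$ be a topological space and $\mathcal{T}$ a family of open subsets of $X$. A $\mathcal{T}$-subset of $X$ is a finite Boolean combination of elements of $\mathcal{T}$; a $\mathcal{T}$-connected subset is a $\mathcal{T}$-subset which is not the disjoint union of two proper $\mathcal{T}$-subsets that are both open and closed in it. $X$ is a $\mathcal{T}$-space if (i) $\mathcal{T}$ is a basis of the topology of $X$ and $\emptyset\in\mathcal{T}$; (ii) $\mathcal{T}$ is closed under finite unions and finite intersections; (iii) every $U\in\mathcal{T}$ has finitely many $\mathcal{T}$-connected components. $X_\mathcal{T}$ is the site whose underlying category is $\mathcal{T}$ (morphisms are inclusions), a family $\{U_i\}\subset\mathcal{T}$ of subsets of $U\in\mathcal{T}$ being a covering of $U$ iff it admits a finite subfamily whose union is $U$. $\mathrm{Mod}(k_\mathcal{T})$ is the category of sheaves of $k$-vector spaces on $X_\mathcal{T}$. $F\in\mathrm{Mod}(k_\mathcal{T})$ is $\mathcal{T}$-flabby if for all $U,V\in\mathcal{T}$ with $U\subseteq V$ the restriction $\Gamma(V;F)\to\Gamma(U;F)$ is surjective. *)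

theory Defs
  imports "HOL-Analysis.Analysis" "HOL-Algebra.Module"
begin

inductive_set tsubsets :: "'a topology \<Rightarrow> 'a set set \<Rightarrow> 'a set set"
  for X T where
  basic: "U \<in> T \<Longrightarrow> U \<in> tsubsets X T"
| compl: "A \<in> tsubsets X T \<Longrightarrow> topspace X - A \<in> tsubsets X T"
| union: "A \<in> tsubsets X T \<Longrightarrow> B \<in> tsubsets X T \<Longrightarrow> A \<union> B \<in> tsubsets X T"

definition tconnected :: "'a topology \<Rightarrow> 'a set set \<Rightarrow> 'a set \<Rightarrow> bool" where
  "tconnected X T S \<longleftrightarrow> S \<in> tsubsets X T \<and>
     \<not> (\<exists>A B. A \<in> tsubsets X T \<and> B \<in> tsubsets X T \<and> A \<union> B = S \<and> A \<inter> B = {} \<and>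
            A \<noteq> S \<and> B \<noteq> S \<and>
            openin (subtopology X S) A \<and> closedin (subtopology X S) A \<and>
            openin (subtopology X S) B \<and> closedin (subtopology X S) B)"

definition tcomponents :: "'a topology \<Rightarrow> 'a set set \<Rightarrow> 'a set \<Rightarrow> 'a set set" where
  "tcomponents X T S = {C. C \<subseteq> S \<and> C \<noteq> {} \<and> tconnected X T C \<and>
      (\<forall>D. tconnected X T D \<and> C \<subseteq> D \<and> D \<subseteq> S \<longrightarrow> D = C)}"

definition tspace :: "'a topology \<Rightarrow> 'a set set \<Rightarrow> bool" where
  "tspace X T \<longleftrightarrow>
     (\<forall>U\<in>T. openin X U) \<and>
     (\<forall>S. openin X S \<longrightarrow> (\<exists>B\<subseteq>T. \<Union>B = S)) \<and>
     {} \<in> T \<and>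
     (\<forall>U\<in>T. \<forall>V\<in>T. U \<union> V \<in> T \<and> U \<inter> V \<in> T) \<and>
     (\<forall>U\<in>T. finite (tcomponents X T U))"

text \<open>A presheaf of K-vector spaces on T: a K-module of sections for each U in T,
  and restriction maps rest V U from sections over V to sections over U.\<close>
record ('a, 'k, 'v) kpsh =
  sect :: "'a set \<Rightarrow> ('k, 'v) module"
  rest :: "'a set \<Rightarrow> 'a set \<Rightarrow> 'v \<Rightarrow> 'v"

definition klinear :: "('k, 'c) ring_scheme \<Rightarrow> ('k, 'v, 'd) module_scheme \<Rightarrow> ('k, 'w, 'e) module_scheme
    \<Rightarrow> ('v \<Rightarrow> 'w) \<Rightarrow> bool" where
  "klinear K M N f \<longleftrightarrow>
     (\<forall>x\<in>carrier M. f x \<in> carrier N) \<and>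
     (\<forall>x\<in>carrier M. \<forall>y\<in>carrier M. f (x \<oplus>\<^bsub>M\<^esub> y) = f x \<oplus>\<^bsub>N\<^esub> f y) \<and>
     (\<forall>a\<in>carrier K. \<forall>x\<in>carrier M. f (a \<odot>\<^bsub>M\<^esub> x) = a \<odot>\<^bsub>N\<^esub> f x)"

definition tcovering :: "'a set set \<Rightarrow> 'a set set \<Rightarrow> 'a set \<Rightarrow> bool" where
  "tcovering T C U \<longleftrightarrow> C \<subseteq> T \<and> (\<forall>W\<in>C. W \<subseteq> U) \<and> (\<exists>C0\<subseteq>C. finite C0 \<and> \<Union>C0 = U)"

definition is_ksheaf :: "('k, 'c) ring_scheme \<Rightarrow> 'a set set \<Rightarrow> ('a, 'k, 'v) kpsh \<Rightarrow> bool" where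
  "is_ksheaf K T F \<longleftrightarrow>
     (\<forall>U\<in>T. module K (sect F U)) \<and>
     (\<forall>U\<in>T. \<forall>V\<in>T. U \<subseteq> V \<longrightarrow> klinear K (sect F V) (sect F U) (rest F V U)) \<and>
     (\<forall>U\<in>T. \<forall>s\<in>carrier (sect F U). rest F U U s = s) \<and>
     (\<forall>U\<in>T. \<forall>V\<in>T. \<forall>W\<in>T. U \<subseteq> V \<and> V \<subseteq> W \<longrightarrow>
        (\<forall>s\<in>carrier (sect F W). rest F V U (rest F W V s) = rest F W U s)) \<and>
     (\<forall>U\<in>T. \<forall>C. tcovering T C U \<longrightarrow>
        (\<forall>s\<in>carrier (sect F U). \<forall>t\<in>carrier (sect F U).
            (\<forall>W\<in>C. rest F U W s = rest F U W t) \<longrightarrow> s = t) \<and>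
        (\<forall>f. (\<forall>W\<in>C. f W \<in> carrier (sect F W)) \<and>
             (\<forall>W1\<in>C. \<forall>W2\<in>C. rest F W1 (W1 \<inter> W2) (f W1) = rest F W2 (W1 \<inter> W2) (f W2)) \<longrightarrow>
             (\<exists>s\<in>carrier (sect F U). \<forall>W\<in>C. rest F U W s = f W)))"

definition is_kmor :: "('k, 'c) ring_scheme \<Rightarrow> 'a set set \<Rightarrow> ('a, 'k, 'v) kpsh \<Rightarrow> ('a, 'k, 'w) kpsh
    \<Rightarrow> ('a set \<Rightarrow> 'v \<Rightarrow> 'w) \<Rightarrow> bool" where
  "is_kmor K T F G \<phi> \<longleftrightarrow>
     (\<forall>U\<in>T. klinear K (sect F U) (sect G U) (\<phi> U)) \<and>
     (\<forall>U\<in>T. \<forall>V\<in>T. U \<subseteq> V \<longrightarrow>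
        (\<forall>s\<in>carrier (sect F V). \<phi> U (rest F V U s) = rest G V U (\<phi> V s)))"

definition is_kmono :: "('k, 'c) ring_scheme \<Rightarrow> 'a set set \<Rightarrow> ('a, 'k, 'v) kpsh \<Rightarrow> ('a, 'k, 'w) kpsh
    \<Rightarrow> ('a set \<Rightarrow> 'v \<Rightarrow> 'w) \<Rightarrow> bool" where
  "is_kmono K T F G \<phi> \<longleftrightarrow> is_kmor K T F G \<phi> \<and> (\<forall>U\<in>T. inj_on (\<phi> U) (carrier (sect F U)))"

text \<open>Exactness of 0 -> F' -> F -> F'' -> 0 in Mod(k_T): phi is injective on sections,
  kernel of psi equals image of phi on sections, and psi is an epimorphism of sheaves
  (every section of F'' lifts locally, i.e. on some covering).\<close>
definition short_exact :: "('k, 'c) ring_scheme \<Rightarrow> 'a set set \<Rightarrow>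
    ('a, 'k, 'v1) kpsh \<Rightarrow> ('a, 'k, 'v2) kpsh \<Rightarrow> ('a, 'k, 'v3) kpsh \<Rightarrow>
    ('a set \<Rightarrow> 'v1 \<Rightarrow> 'v2) \<Rightarrow> ('a set \<Rightarrow> 'v2 \<Rightarrow> 'v3) \<Rightarrow> bool" where
  "short_exact K T F1 F2 F3 \<phi> \<psi> \<longleftrightarrow>
     is_ksheaf K T F1 \<and> is_ksheaf K T F2 \<and> is_ksheaf K T F3 \<and>
     is_kmor K T F1 F2 \<phi> \<and> is_kmor K T F2 F3 \<psi> \<and>
     (\<forall>U\<in>T. inj_on (\<phi> U) (carrier (sect F1 U))) \<and>
     (\<forall>U\<in>T. {s \<in> carrier (sect F2 U). \<psi> U s = \<zero>\<^bsub>sect F3 U\<^esub>} = \<phi> U ` carrier (sect F1 U)) \<and>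
     (\<forall>U\<in>T. \<forall>t\<in>carrier (sect F3 U). \<exists>C. tcovering T C U \<and>
        (\<forall>W\<in>C. \<exists>s\<in>carrier (sect F2 W). \<psi> W s = rest F3 U W t))"

definition sections_exact :: "('a, 'k, 'v1) kpsh \<Rightarrow> ('a, 'k, 'v2) kpsh \<Rightarrow> ('a, 'k, 'v3) kpsh \<Rightarrow>
    ('a set \<Rightarrow> 'v1 \<Rightarrow> 'v2) \<Rightarrow> ('a set \<Rightarrow> 'v2 \<Rightarrow> 'v3) \<Rightarrow> 'a set \<Rightarrow> bool" where
  "sections_exact F1 F2 F3 \<phi> \<psi> U \<longleftrightarrow>
     inj_on (\<phi> U) (carrier (sect F1 U)) \<and>
     {s \<in> carrier (sect F2 U). \<psi> U s = \<zero>\<^bsub>sect F3 U\<^esub>} = \<phi> U ` carrier (sect F1 U) \<and>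
     \<psi> U ` carrier (sect F2 U) = carrier (sect F3 U)"

definition tflabby :: "'a set set \<Rightarrow> ('a, 'k, 'v) kpsh \<Rightarrow> bool" where
  "tflabby T F \<longleftrightarrow> (\<forall>U\<in>T. \<forall>V\<in>T. U \<subseteq> V \<longrightarrow> rest F V U ` carrier (sect F V) = carrier (sect F U))"

end

theory Submission
  imports Defs
begin

text \<open>
  The points of \<open>X\<^sub>T\<close> are the prime filters of the lattice \<open>T\<close>. The Godement sheaf of \<open>F\<close> assigns to
  \<open>U\<close> the product of the stalks of \<open>F\<close> at the prime filters containing \<open>U\<close>. It is \<open>T\<close>-flabby
  because such families extend by zero, and \<open>F\<close> embeds into it because two sections over \<open>U\<close>
  with the same germs everywhere agree: the opens on which they agree form an ideal of \<open>T\<close>, and the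
  prime filter theorem separates \<open>U\<close> from every ideal not containing it.

  For (ii), a section of \<open>F''\<close> lifts locally on a finite cover. Lifts over \<open>V\<close> and \<open>W\<close> differ on
  \<open>V \<inter> W\<close> by a section of \<open>F'\<close>; since \<open>F'\<close> is flabby it extends to \<open>W\<close>, and subtracting it makes
  the two lifts glue. Induction over the cover gives a global lift. The same correction shows (iii).
\<close>

section \<open>Prime filters of a lattice of sets\<close>

definition lattice_filter :: "'a set set \<Rightarrow> 'a set set \<Rightarrow> bool" where
  "lattice_filter T p \<longleftrightarrow>
     p \<subseteq> T \<and> (\<forall>A\<in>p. \<forall>B\<in>T. A \<subseteq> B \<longrightarrow> B \<in> p) \<and> (\<forall>A\<in>p. \<forall>B\<in>p. A \<inter> B \<in> p)"

definition prime_filter :: "'a set set \<Rightarrow> 'a set set \<Rightarrow> bool" where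
  "prime_filter T p \<longleftrightarrow>
     lattice_filter T p \<and> {} \<notin> p \<and> (\<forall>A\<in>T. \<forall>B\<in>T. A \<union> B \<in> p \<longrightarrow> A \<in> p \<or> B \<in> p)"

definition lattice_ideal :: "'a set set \<Rightarrow> 'a set set \<Rightarrow> bool" where
  "lattice_ideal T I \<longleftrightarrow>
     I \<subseteq> T \<and> {} \<in> I \<and> (\<forall>A\<in>I. \<forall>B\<in>T. B \<subseteq> A \<longrightarrow> B \<in> I) \<and> (\<forall>A\<in>I. \<forall>B\<in>I. A \<union> B \<in> I)"

lemma lattice_filterD:
  assumes "lattice_filter T p"
  shows "p \<subseteq> T" "A \<in> p \<Longrightarrow> B \<in> T \<Longrightarrow> A \<subseteq> B \<Longrightarrow> B \<in> p" "A \<in> p \<Longrightarrow> B \<in> p \<Longrightarrow> A \<inter> B \<in> p"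
  using assms unfolding lattice_filter_def by blast+

lemma prime_filterD:
  assumes "prime_filter T p"
  shows "lattice_filter T p" "{} \<notin> p" "A \<in> T \<Longrightarrow> B \<in> T \<Longrightarrow> A \<union> B \<in> p \<Longrightarrow> A \<in> p \<or> B \<in> p"
  using assms unfolding prime_filter_def by blast+

lemma lattice_idealD:
  assumes "lattice_ideal T I"
  shows "I \<subseteq> T" "{} \<in> I" "A \<in> I \<Longrightarrow> B \<in> T \<Longrightarrow> B \<subseteq> A \<Longrightarrow> B \<in> I" "A \<in> I \<Longrightarrow> B \<in> I \<Longrightarrow> A \<union> B \<in> I"
  using assms unfolding lattice_ideal_def by blast+

locale set_lattice =
  fixes T :: "'a set set"
  assumes empty_mem: "{} \<in> T"
    and Un_mem: "A \<in> T \<Longrightarrow> B \<in> T \<Longrightarrow> A \<union> B \<in> T"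
    and Int_mem: "A \<in> T \<Longrightarrow> B \<in> T \<Longrightarrow> A \<inter> B \<in> T"
begin

lemma Union_mem: "finite C \<Longrightarrow> C \<subseteq> T \<Longrightarrow> \<Union>C \<in> T"
  by (induction C rule: finite_induct) (auto intro: empty_mem Un_mem)

lemma prime_filter_Union:
  assumes "prime_filter T p" "finite C" "C \<subseteq> T" "\<Union>C \<in> p"
  shows "\<exists>W\<in>C. W \<in> p"
  using assms(2-4)
proof (induction C rule: finite_induct)
  case empty
  then show ?case using prime_filterD(2)[OF assms(1)] by simp
next
  case (insert W C)
  then have "W \<in> p \<or> \<Union>C \<in> p"
    using prime_filterD(3)[OF assms(1)] Union_mem by simp
  then show ?case using insert by blast
qed

lemma lattice_filter_Union_chain:
  assumes "C \<noteq> {}" "subset.chain {q. lattice_filter T q} C"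
  shows "lattice_filter T (\<Union>C)"
  unfolding lattice_filter_def
proof (intro conjI ballI impI)
  have filters: "\<And>q. q \<in> C \<Longrightarrow> lattice_filter T q" and chain: "\<And>q q'. q \<in> C \<Longrightarrow> q' \<in> C \<Longrightarrow> q \<subseteq> q' \<or> q' \<subseteq> q"
    using assms(2) unfolding subset.chain_def by blast+
  show "\<Union>C \<subseteq> T" using filters lattice_filterD(1) by blast
  show "B \<in> \<Union>C" if "A \<in> \<Union>C" "B \<in> T" "A \<subseteq> B" for A B
    using that filters lattice_filterD(2) by blast
  show "A \<inter> B \<in> \<Union>C" if AB: "A \<in> \<Union>C" "B \<in> \<Union>C" for A B
  proof -
    obtain q q' where "q \<in> C" "q' \<in> C" "A \<in> q" "B \<in> q'" using AB by blast
    then show ?thesis using chain[of q q'] filters lattice_filterD(3) by blast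
  qed
qed

lemma maximal_filter_exists:
  assumes "U \<in> T" "lattice_ideal T I" "U \<notin> I"
  obtains M where "lattice_filter T M" "U \<in> M" "M \<inter> I = {}"
    "\<And>q. lattice_filter T q \<Longrightarrow> M \<subseteq> q \<Longrightarrow> q \<inter> I = {} \<Longrightarrow> q = M"
proof -
  define FF where "FF = {q. lattice_filter T q \<and> U \<in> q \<and> q \<inter> I = {}}"
  have "{Z \<in> T. U \<subseteq> Z} \<inter> I = {}"
    using assms lattice_idealD(3)[OF assms(2)] by blast
  then have "{Z \<in> T. U \<subseteq> Z} \<in> FF"
    using assms(1) Int_mem unfolding FF_def lattice_filter_def by blast
  then have "FF \<noteq> {}" by blast
  moreover have "\<Union>C \<in> FF" if C: "C \<noteq> {}" "subset.chain FF C" for C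
  proof -
    have "C \<subseteq> FF" using C(2) unfolding subset.chain_def by blast
    moreover have "subset.chain {q. lattice_filter T q} C"
      using C(2) unfolding FF_def subset.chain_def by blast
    ultimately show ?thesis
      using lattice_filter_Union_chain[OF C(1)] C(1) unfolding FF_def by blast
  qed
  ultimately obtain M where M: "M \<in> FF" and max: "\<forall>q\<in>FF. M \<subseteq> q \<longrightarrow> q = M"
    using subset_Zorn_nonempty[of FF] by blast
  show thesis
  proof (rule that)
    show "lattice_filter T M" "U \<in> M" "M \<inter> I = {}" using M unfolding FF_def by blast+
    show "q = M" if "lattice_filter T q" "M \<subseteq> q" "q \<inter> I = {}" for q
      using max that \<open>U \<in> M\<close> unfolding FF_def by blast
  qed
qed

text \<open>Otherwise the filter generated by \<open>M\<close> and \<open>A\<close> would still avoid \<open>I\<close>, contradicting maximality.\<close>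
lemma maximal_filter_meets_ideal:
  assumes ideal: "lattice_ideal T I" and M: "lattice_filter T M" "M \<inter> I = {}" "M \<noteq> {}"
    and max: "\<And>q. lattice_filter T q \<Longrightarrow> M \<subseteq> q \<Longrightarrow> q \<inter> I = {} \<Longrightarrow> q = M"
    and A: "A \<in> T" "A \<notin> M"
  shows "\<exists>P\<in>M. P \<inter> A \<in> I"
proof (rule ccontr)
  assume avoid: "\<not> (\<exists>P\<in>M. P \<inter> A \<in> I)"
  define q where "q = {Z \<in> T. \<exists>P\<in>M. P \<inter> A \<subseteq> Z}"
  have "q \<subseteq> T" unfolding q_def by blast
  moreover have "Y \<in> q" if "X \<in> q" "Y \<in> T" "X \<subseteq> Y" for X Y
    using that unfolding q_def by blast
  moreover have "X \<inter> Y \<in> q" if XY: "X \<in> q" "Y \<in> q" for X Y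
  proof -
    obtain P P' where PP': "X \<in> T" "Y \<in> T" "P \<in> M" "P' \<in> M" "P \<inter> A \<subseteq> X" "P' \<inter> A \<subseteq> Y"
      using XY unfolding q_def by blast
    have "P \<inter> P' \<in> M" using PP'(3,4) lattice_filterD(3)[OF M(1)] by blast
    moreover have "P \<inter> P' \<inter> A \<subseteq> X \<inter> Y" using PP'(5,6) by blast
    moreover have "X \<inter> Y \<in> T" using Int_mem[OF PP'(1,2)] .
    ultimately show ?thesis unfolding q_def by blast
  qed
  ultimately have "lattice_filter T q" unfolding lattice_filter_def by blast
  moreover have "q \<inter> I = {}"
  proof (rule ccontr)
    assume "q \<inter> I \<noteq> {}"
    then obtain Z P where "Z \<in> I" "P \<in> M" "P \<inter> A \<subseteq> Z"
      unfolding q_def by blast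
    moreover have "P \<inter> A \<in> T" using \<open>P \<in> M\<close> lattice_filterD(1)[OF M(1)] A(1) Int_mem by blast
    ultimately show False using avoid lattice_idealD(3)[OF ideal] by blast
  qed
  moreover have "M \<subseteq> q" using lattice_filterD(1)[OF M(1)] unfolding q_def by blast
  moreover have "A \<in> q" using A(1) M(3) unfolding q_def by blast
  ultimately show False using max A(2) by blast
qed

lemma maximal_filter_prime:
  assumes ideal: "lattice_ideal T I" and M: "lattice_filter T M" "M \<inter> I = {}"
    and max: "\<And>q. lattice_filter T q \<Longrightarrow> M \<subseteq> q \<Longrightarrow> q \<inter> I = {} \<Longrightarrow> q = M"
  shows "prime_filter T M"
proof -
  have "A \<in> M \<or> B \<in> M" if AB: "A \<in> T" "B \<in> T" "A \<union> B \<in> M" for A B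
  proof (rule ccontr)
    assume nAB: "\<not> (A \<in> M \<or> B \<in> M)"
    have "M \<noteq> {}" using AB(3) by blast
    obtain P where P: "P \<in> M" "P \<inter> A \<in> I"
      using maximal_filter_meets_ideal[OF ideal M \<open>M \<noteq> {}\<close> max AB(1)] nAB by blast
    obtain P' where P': "P' \<in> M" "P' \<inter> B \<in> I"
      using maximal_filter_meets_ideal[OF ideal M \<open>M \<noteq> {}\<close> max AB(2)] nAB by blast
    define Q where "Q = P \<inter> P' \<inter> (A \<union> B)"
    have "Q \<in> M" unfolding Q_def using P P' AB(3) lattice_filterD(3)[OF M(1)] by blast
    then have QT: "Q \<in> T" using lattice_filterD(1)[OF M(1)] by blast
    have "Q \<inter> A \<in> I" using lattice_idealD(3)[OF ideal P(2) Int_mem[OF QT AB(1)]] unfolding Q_def by blast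
    moreover have "Q \<inter> B \<in> I" using lattice_idealD(3)[OF ideal P'(2) Int_mem[OF QT AB(2)]] unfolding Q_def by blast
    ultimately have "(Q \<inter> A) \<union> (Q \<inter> B) \<in> I" using lattice_idealD(4)[OF ideal] by blast
    moreover have "(Q \<inter> A) \<union> (Q \<inter> B) = Q" unfolding Q_def by blast
    ultimately have "Q \<in> I" by simp
    then show False using \<open>Q \<in> M\<close> M(2) by blast
  qed
  moreover have "{} \<notin> M" using M(2) lattice_idealD(2)[OF ideal] by blast
  ultimately show ?thesis unfolding prime_filter_def using M(1) by blast
qed

lemma prime_filter_separates:
  assumes "U \<in> T" "lattice_ideal T I" "U \<notin> I"
  obtains p where "prime_filter T p" "U \<in> p" "p \<inter> I = {}"
proof -
  obtain M where M: "lattice_filter T M" "U \<in> M" "M \<inter> I = {}"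
    "\<And>q. lattice_filter T q \<Longrightarrow> M \<subseteq> q \<Longrightarrow> q \<inter> I = {} \<Longrightarrow> q = M"
    using maximal_filter_exists[OF assms] by blast
  show thesis by (rule that[OF maximal_filter_prime[OF assms(2) M(1,3,4)] M(2,3)])
qed

end

lemma klinear_closed: "klinear K M N f \<Longrightarrow> x \<in> carrier M \<Longrightarrow> f x \<in> carrier N"
  unfolding klinear_def by blast

lemma klinear_add:
  "klinear K M N f \<Longrightarrow> x \<in> carrier M \<Longrightarrow> y \<in> carrier M \<Longrightarrow> f (x \<oplus>\<^bsub>M\<^esub> y) = f x \<oplus>\<^bsub>N\<^esub> f y"
  unfolding klinear_def by blast

lemma klinear_smult:
  "klinear K M N f \<Longrightarrow> a \<in> carrier K \<Longrightarrow> x \<in> carrier M \<Longrightarrow> f (a \<odot>\<^bsub>M\<^esub> x) = a \<odot>\<^bsub>N\<^esub> f x"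
  unfolding klinear_def by blast

lemma klinear_zero:
  assumes "module K M" "module K N" "klinear K M N f"
  shows "f \<zero>\<^bsub>M\<^esub> = \<zero>\<^bsub>N\<^esub>"
proof -
  interpret M: module K M by fact
  interpret N: module K N by fact
  have "f (\<zero>\<^bsub>K\<^esub> \<odot>\<^bsub>M\<^esub> \<zero>\<^bsub>M\<^esub>) = \<zero>\<^bsub>K\<^esub> \<odot>\<^bsub>N\<^esub> f \<zero>\<^bsub>M\<^esub>"
    by (rule klinear_smult[OF assms(3)]) simp_all
  then show ?thesis using klinear_closed[OF assms(3)] by simp
qed

lemma klinear_minus:
  assumes "module K M" "module K N" "klinear K M N f" "x \<in> carrier M"
  shows "f (\<ominus>\<^bsub>M\<^esub> x) = \<ominus>\<^bsub>N\<^esub> f x"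
proof -
  interpret M: module K M by fact
  interpret N: module K N by fact
  have "f (\<ominus>\<^bsub>M\<^esub> x) = f ((\<ominus>\<^bsub>K\<^esub> \<one>\<^bsub>K\<^esub>) \<odot>\<^bsub>M\<^esub> x)" using assms(4) M.smult_l_minus by simp
  also have "\<dots> = (\<ominus>\<^bsub>K\<^esub> \<one>\<^bsub>K\<^esub>) \<odot>\<^bsub>N\<^esub> f x" using klinear_smult[OF assms(3)] assms(4) by simp
  also have "\<dots> = \<ominus>\<^bsub>N\<^esub> f x" using klinear_closed[OF assms(3,4)] N.smult_l_minus by simp
  finally show ?thesis .
qed

lemma klinear_diff:
  assumes "module K M" "module K N" "klinear K M N f" "x \<in> carrier M" "y \<in> carrier M"
  shows "f (x \<ominus>\<^bsub>M\<^esub> y) = f x \<ominus>\<^bsub>N\<^esub> f y"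
proof -
  interpret M: module K M by fact
  show ?thesis unfolding a_minus_def
    using klinear_add[OF assms(3)] klinear_minus[OF assms(1-3)] assms(4,5) by simp
qed

definition prod_module :: "'i set \<Rightarrow> ('i \<Rightarrow> ('k, 'b) module) \<Rightarrow> ('k, 'i \<Rightarrow> 'b) module" where
  "prod_module I M =
     \<lparr>carrier = (\<Pi>\<^sub>E i\<in>I. carrier (M i)), mult = (\<lambda>f g. undefined), one = undefined,
      zero = (\<lambda>i\<in>I. \<zero>\<^bsub>M i\<^esub>), add = (\<lambda>f g. \<lambda>i\<in>I. f i \<oplus>\<^bsub>M i\<^esub> g i),
      smult = (\<lambda>a f. \<lambda>i\<in>I. a \<odot>\<^bsub>M i\<^esub> f i)\<rparr>"

lemma prod_module_simps:
  "carrier (prod_module I M) = (\<Pi>\<^sub>E i\<in>I. carrier (M i))"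
  "\<zero>\<^bsub>prod_module I M\<^esub> = (\<lambda>i\<in>I. \<zero>\<^bsub>M i\<^esub>)"
  "f \<oplus>\<^bsub>prod_module I M\<^esub> g = (\<lambda>i\<in>I. f i \<oplus>\<^bsub>M i\<^esub> g i)"
  "a \<odot>\<^bsub>prod_module I M\<^esub> f = (\<lambda>i\<in>I. a \<odot>\<^bsub>M i\<^esub> f i)"
  unfolding prod_module_def by simp_all

lemma module_prod_module:
  assumes K: "cring K" and M: "\<And>i. i \<in> I \<Longrightarrow> module K (M i)"
  shows "module K (prod_module I M)"
proof -
  note M_ag = module.axioms(2)[OF M]
  note M_am = abelian_group.axioms(1)[OF M_ag]
  have closed: "\<And>f i. f \<in> carrier (prod_module I M) \<Longrightarrow> i \<in> I \<Longrightarrow> f i \<in> carrier (M i)"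
    unfolding prod_module_simps by blast
  show ?thesis
  proof (rule moduleI[OF K])
    show "abelian_group (prod_module I M)"
    proof (rule abelian_groupI)
      fix f assume f: "f \<in> carrier (prod_module I M)"
      show "\<exists>g\<in>carrier (prod_module I M). g \<oplus>\<^bsub>prod_module I M\<^esub> f = \<zero>\<^bsub>prod_module I M\<^esub>"
      proof
        show "(\<lambda>i\<in>I. \<ominus>\<^bsub>M i\<^esub> f i) \<in> carrier (prod_module I M)"
          using closed[OF f] abelian_group.a_inv_closed[OF M_ag] unfolding prod_module_simps by auto
        show "(\<lambda>i\<in>I. \<ominus>\<^bsub>M i\<^esub> f i) \<oplus>\<^bsub>prod_module I M\<^esub> f = \<zero>\<^bsub>prod_module I M\<^esub>"
          using closed[OF f] abelian_group.l_neg[OF M_ag] unfolding prod_module_simps by auto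
      qed
    qed (auto simp: prod_module_simps abelian_monoid.a_assoc[OF M_am] abelian_monoid.a_comm[OF M_am] abelian_monoid.a_lcomm[OF M_am] abelian_monoid.r_zero[OF M_am]
          abelian_monoid.l_zero[OF M_am] abelian_monoid.a_closed[OF M_am]
          abelian_monoid.zero_closed[OF M_am] PiE_iff fun_eq_iff extensional_def)
  qed (auto simp: prod_module_simps PiE_iff module.smult_l_distr[OF M] module.smult_r_distr[OF M]
      module.smult_assoc1[OF M] module.smult_one[OF M] module.smult_closed[OF M] fun_eq_iff extensional_def)
qed

lemma is_ksheafD:
  assumes "is_ksheaf K T F"
  shows "U \<in> T \<Longrightarrow> module K (sect F U)"
    and "U \<in> T \<Longrightarrow> V \<in> T \<Longrightarrow> U \<subseteq> V \<Longrightarrow> klinear K (sect F V) (sect F U) (rest F V U)"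
    and "U \<in> T \<Longrightarrow> s \<in> carrier (sect F U) \<Longrightarrow> rest F U U s = s"
    and "U \<in> T \<Longrightarrow> V \<in> T \<Longrightarrow> W \<in> T \<Longrightarrow> U \<subseteq> V \<Longrightarrow> V \<subseteq> W \<Longrightarrow> s \<in> carrier (sect F W) \<Longrightarrow>
      rest F V U (rest F W V s) = rest F W U s"
    and "U \<in> T \<Longrightarrow> tcovering T C U \<Longrightarrow> s \<in> carrier (sect F U) \<Longrightarrow> t \<in> carrier (sect F U) \<Longrightarrow>
      (\<And>W. W \<in> C \<Longrightarrow> rest F U W s = rest F U W t) \<Longrightarrow> s = t"
    and "U \<in> T \<Longrightarrow> tcovering T C U \<Longrightarrow> (\<And>W. W \<in> C \<Longrightarrow> f W \<in> carrier (sect F W)) \<Longrightarrow>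
      (\<And>W1 W2. W1 \<in> C \<Longrightarrow> W2 \<in> C \<Longrightarrow> rest F W1 (W1 \<inter> W2) (f W1) = rest F W2 (W1 \<inter> W2) (f W2)) \<Longrightarrow>
      \<exists>s\<in>carrier (sect F U). \<forall>W\<in>C. rest F U W s = f W"
proof -
  note parts = assms[unfolded is_ksheaf_def]
  show "U \<in> T \<Longrightarrow> module K (sect F U)" using parts[THEN conjunct1] by blast
  show "U \<in> T \<Longrightarrow> V \<in> T \<Longrightarrow> U \<subseteq> V \<Longrightarrow> klinear K (sect F V) (sect F U) (rest F V U)"
    using parts[THEN conjunct2, THEN conjunct1] by blast
  show "U \<in> T \<Longrightarrow> s \<in> carrier (sect F U) \<Longrightarrow> rest F U U s = s"
    using parts[THEN conjunct2, THEN conjunct2, THEN conjunct1] by blast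
  show "U \<in> T \<Longrightarrow> V \<in> T \<Longrightarrow> W \<in> T \<Longrightarrow> U \<subseteq> V \<Longrightarrow> V \<subseteq> W \<Longrightarrow> s \<in> carrier (sect F W) \<Longrightarrow>
      rest F V U (rest F W V s) = rest F W U s"
    using parts[THEN conjunct2, THEN conjunct2, THEN conjunct2, THEN conjunct1] by blast
  note cover = parts[THEN conjunct2, THEN conjunct2, THEN conjunct2, THEN conjunct2]
  show "U \<in> T \<Longrightarrow> tcovering T C U \<Longrightarrow> s \<in> carrier (sect F U) \<Longrightarrow> t \<in> carrier (sect F U) \<Longrightarrow>
      (\<And>W. W \<in> C \<Longrightarrow> rest F U W s = rest F U W t) \<Longrightarrow> s = t"
    using cover by blast
  assume "U \<in> T" "tcovering T C U" "\<And>W. W \<in> C \<Longrightarrow> f W \<in> carrier (sect F W)"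
    "\<And>W1 W2. W1 \<in> C \<Longrightarrow> W2 \<in> C \<Longrightarrow> rest F W1 (W1 \<inter> W2) (f W1) = rest F W2 (W1 \<inter> W2) (f W2)"
  moreover have "\<forall>f. (\<forall>W\<in>C. f W \<in> carrier (sect F W)) \<and>
      (\<forall>W1\<in>C. \<forall>W2\<in>C. rest F W1 (W1 \<inter> W2) (f W1) = rest F W2 (W1 \<inter> W2) (f W2)) \<longrightarrow>
      (\<exists>s\<in>carrier (sect F U). \<forall>W\<in>C. rest F U W s = f W)"
    using cover calculation(1,2) by blast
  ultimately show "\<exists>s\<in>carrier (sect F U). \<forall>W\<in>C. rest F U W s = f W" by blast
qed

locale ksheaf = set_lattice T for T :: "'a set set" +
  fixes K :: "'k ring" and F :: "('a, 'k, 'v) kpsh"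
  assumes sheaf: "is_ksheaf K T F"
begin

lemmas sect_module = is_ksheafD(1)[OF sheaf]
  and rest_klinear = is_ksheafD(2)[OF sheaf]
  and rest_id = is_ksheafD(3)[OF sheaf]
  and rest_rest = is_ksheafD(4)[OF sheaf]
  and sections_eqI = is_ksheafD(5)[OF sheaf]
  and sections_glue = is_ksheafD(6)[OF sheaf]

lemma sect_zero_closed: "U \<in> T \<Longrightarrow> \<zero>\<^bsub>sect F U\<^esub> \<in> carrier (sect F U)"
  using abelian_monoid.zero_closed[OF abelian_group.axioms(1)[OF module.axioms(2)[OF sect_module]]] .

lemma sect_add_closed:
  "U \<in> T \<Longrightarrow> s \<in> carrier (sect F U) \<Longrightarrow> t \<in> carrier (sect F U) \<Longrightarrow> s \<oplus>\<^bsub>sect F U\<^esub> t \<in> carrier (sect F U)"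
  using abelian_monoid.a_closed[OF abelian_group.axioms(1)[OF module.axioms(2)[OF sect_module]]] .

lemma cring_K: "cring K"
  using sect_module[OF empty_mem] by (rule module.axioms(1))

lemma rest_closed: "U \<in> T \<Longrightarrow> V \<in> T \<Longrightarrow> U \<subseteq> V \<Longrightarrow> s \<in> carrier (sect F V) \<Longrightarrow> rest F V U s \<in> carrier (sect F U)"
  by (rule klinear_closed[OF rest_klinear])

lemma rest_add:
  "U \<in> T \<Longrightarrow> V \<in> T \<Longrightarrow> U \<subseteq> V \<Longrightarrow> s \<in> carrier (sect F V) \<Longrightarrow> t \<in> carrier (sect F V) \<Longrightarrow>
   rest F V U (s \<oplus>\<^bsub>sect F V\<^esub> t) = rest F V U s \<oplus>\<^bsub>sect F U\<^esub> rest F V U t"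
  by (rule klinear_add[OF rest_klinear])

lemma rest_smult:
  "U \<in> T \<Longrightarrow> V \<in> T \<Longrightarrow> U \<subseteq> V \<Longrightarrow> a \<in> carrier K \<Longrightarrow> s \<in> carrier (sect F V) \<Longrightarrow>
   rest F V U (a \<odot>\<^bsub>sect F V\<^esub> s) = a \<odot>\<^bsub>sect F U\<^esub> rest F V U s"
  by (rule klinear_smult[OF rest_klinear])

lemma rest_zero: "U \<in> T \<Longrightarrow> V \<in> T \<Longrightarrow> U \<subseteq> V \<Longrightarrow> rest F V U \<zero>\<^bsub>sect F V\<^esub> = \<zero>\<^bsub>sect F U\<^esub>"
  by (rule klinear_zero[OF sect_module sect_module rest_klinear])

lemma rest_eq_mono:
  assumes "Z \<in> T" "Y \<in> T" "V \<in> T" "W \<in> T" "Z \<subseteq> Y" "Y \<subseteq> V" "Y \<subseteq> W"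
    "s \<in> carrier (sect F V)" "t \<in> carrier (sect F W)" "rest F V Y s = rest F W Y t"
  shows "rest F V Z s = rest F W Z t"
  using rest_rest[of Z Y V s] rest_rest[of Z Y W t] assms by simp

lemma tcovering_pair: "V \<in> T \<Longrightarrow> W \<in> T \<Longrightarrow> tcovering T {V, W} (V \<union> W)"
  unfolding tcovering_def by auto

lemma sections_eq_pairI:
  assumes "V \<in> T" "W \<in> T" "s \<in> carrier (sect F (V \<union> W))" "t \<in> carrier (sect F (V \<union> W))"
    "rest F (V \<union> W) V s = rest F (V \<union> W) V t" "rest F (V \<union> W) W s = rest F (V \<union> W) W t"
  shows "s = t"
  by (rule sections_eqI[OF Un_mem[OF assms(1,2)] tcovering_pair[OF assms(1,2)] assms(3,4)]) (use assms(5,6) in blast)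

lemma sections_glue_pair:
  assumes V: "V \<in> T" and W: "W \<in> T" and s: "s \<in> carrier (sect F V)" and t: "t \<in> carrier (sect F W)"
    and agree: "rest F V (V \<inter> W) s = rest F W (V \<inter> W) t"
  shows "\<exists>u\<in>carrier (sect F (V \<union> W)). rest F (V \<union> W) V u = s \<and> rest F (V \<union> W) W u = t"
proof -
  define f where "f Z = (if Z = V then s else t)" for Z
  have fV: "f V = s" unfolding f_def by simp
  have fW: "f W = t"
  proof (cases "W = V")
    case True
    have "s = rest F V V s" using rest_id[OF V s] by simp
    also have "\<dots> = rest F W W t" using agree True by simp
    also have "\<dots> = t" using rest_id[OF W t] .
    finally show ?thesis using True fV by simp
  next
    case False
    then show ?thesis unfolding f_def by simp
  qed
  have f_carrier: "f Z \<in> carrier (sect F Z)" if "Z \<in> {V, W}" for Z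
    using that s t fV fW by auto
  have f_compat: "rest F W1 (W1 \<inter> W2) (f W1) = rest F W2 (W1 \<inter> W2) (f W2)"
    if "W1 \<in> {V, W}" "W2 \<in> {V, W}" for W1 W2
  proof -
    have "W1 = V \<and> W2 = W \<or> W1 = W \<and> W2 = V \<or> W1 = W2" using that by blast
    then show ?thesis using agree fV fW by (auto simp: Int_commute)
  qed
  have "\<exists>u\<in>carrier (sect F (V \<union> W)). \<forall>Z\<in>{V, W}. rest F (V \<union> W) Z u = f Z"
    by (rule sections_glue[OF Un_mem[OF V W] tcovering_pair[OF V W]]) (fact f_carrier, fact f_compat)
  then show ?thesis using fV fW by auto
qed

lemma sections_empty_unique: "s \<in> carrier (sect F {}) \<Longrightarrow> t \<in> carrier (sect F {}) \<Longrightarrow> s = t"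
  by (rule sections_eqI[of "{}" "{}"]) (auto simp: tcovering_def empty_mem)

lemma tflabby_iff_extend:
  "tflabby T F \<longleftrightarrow>
     (\<forall>U\<in>T. \<forall>V\<in>T. U \<subseteq> V \<longrightarrow> (\<forall>s\<in>carrier (sect F U). \<exists>s'\<in>carrier (sect F V). rest F V U s' = s))"
proof -
  have "rest F V U ` carrier (sect F V) = carrier (sect F U) \<longleftrightarrow>
      (\<forall>s\<in>carrier (sect F U). \<exists>s'\<in>carrier (sect F V). rest F V U s' = s)"
    if "U \<in> T" "V \<in> T" "U \<subseteq> V" for U V
  proof -
    have "rest F V U ` carrier (sect F V) \<subseteq> carrier (sect F U)" using rest_closed[OF that] by blast
    then have "rest F V U ` carrier (sect F V) = carrier (sect F U) \<longleftrightarrow>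
        carrier (sect F U) \<subseteq> rest F V U ` carrier (sect F V)" by blast
    also have "\<dots> \<longleftrightarrow> (\<forall>s\<in>carrier (sect F U). \<exists>s'\<in>carrier (sect F V). rest F V U s' = s)"
      unfolding subset_iff image_iff Ball_def by (simp add: eq_commute)
    finally show ?thesis .
  qed
  then show ?thesis unfolding tflabby_def by simp
qed


subsection \<open>Germs and stalks\<close>

text \<open>The stalk at a filter \<open>p\<close> is the quotient of the pairs \<open>(W, v)\<close> with \<open>W \<in> p\<close> by \<open>germ_rel p\<close>;
  a germ is an equivalence class, hence a set of such pairs.\<close>

definition germ_rel :: "'a set set \<Rightarrow> (('a set \<times> 'v) \<times> ('a set \<times> 'v)) set" where
  "germ_rel p = {((W, v), (W', v')). W \<in> p \<and> W' \<in> p \<and> v \<in> carrier (sect F W) \<and> v' \<in> carrier (sect F W') \<and>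
      (\<exists>Z\<in>p. Z \<subseteq> W \<inter> W' \<and> rest F W Z v = rest F W' Z v')}"

definition germ :: "'a set set \<Rightarrow> 'a set \<Rightarrow> 'v \<Rightarrow> ('a set \<times> 'v) set" where
  "germ p W v = germ_rel p `` {(W, v)}"

lemma germ_rel_iff:
  "((W, v), (W', v')) \<in> germ_rel p \<longleftrightarrow> W \<in> p \<and> W' \<in> p \<and> v \<in> carrier (sect F W) \<and> v' \<in> carrier (sect F W') \<and>
      (\<exists>Z\<in>p. Z \<subseteq> W \<inter> W' \<and> rest F W Z v = rest F W' Z v')"
  unfolding germ_rel_def by simp

lemma germ_rel_trans:
  assumes p: "lattice_filter T p"
    and "((W1, v1), (W2, v2)) \<in> germ_rel p" "((W2, v2), (W3, v3)) \<in> germ_rel p"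
  shows "((W1, v1), (W3, v3)) \<in> germ_rel p"
proof -
  obtain Z where reps: "W1 \<in> p" "W2 \<in> p" "v1 \<in> carrier (sect F W1)" "v2 \<in> carrier (sect F W2)"
    and Z: "Z \<in> p" "Z \<subseteq> W1 \<inter> W2" "rest F W1 Z v1 = rest F W2 Z v2"
    using assms(2) unfolding germ_rel_iff by blast
  obtain Z' where reps': "W3 \<in> p" "v3 \<in> carrier (sect F W3)"
    and Z': "Z' \<in> p" "Z' \<subseteq> W2 \<inter> W3" "rest F W2 Z' v2 = rest F W3 Z' v3"
    using assms(3) unfolding germ_rel_iff by blast
  have ZZ': "Z \<inter> Z' \<in> p" using lattice_filterD(3)[OF p Z(1) Z'(1)] .
  have T: "Z \<inter> Z' \<in> T" "Z \<in> T" "Z' \<in> T" "W1 \<in> T" "W2 \<in> T" "W3 \<in> T"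
    using ZZ' Z(1) Z'(1) reps(1,2) reps'(1) lattice_filterD(1)[OF p] by auto
  have "rest F W1 (Z \<inter> Z') v1 = rest F W2 (Z \<inter> Z') v2"
    by (rule rest_eq_mono[OF T(1,2,4,5) _ _ _ reps(3,4) Z(3)]) (use Z(2) in auto)
  also have "\<dots> = rest F W3 (Z \<inter> Z') v3"
    by (rule rest_eq_mono[OF T(1,3,5,6) _ _ _ reps(4) reps'(2) Z'(3)]) (use Z'(2) in auto)
  finally have "rest F W1 (Z \<inter> Z') v1 = rest F W3 (Z \<inter> Z') v3" .
  moreover have "Z \<inter> Z' \<subseteq> W1 \<inter> W3" using Z(2) Z'(2) by blast
  ultimately show ?thesis unfolding germ_rel_iff using reps reps' ZZ' by blast
qed

lemma equiv_germ_rel: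
  assumes p: "lattice_filter T p"
  shows "equiv (SIGMA W:p. carrier (sect F W)) (germ_rel p)"
proof (rule equivI)
  show "germ_rel p \<subseteq> (SIGMA W:p. carrier (sect F W)) \<times> (SIGMA W:p. carrier (sect F W))"
    unfolding germ_rel_def by blast
  show "refl_on (SIGMA W:p. carrier (sect F W)) (germ_rel p)"
  proof (rule refl_onI)
    fix x assume "x \<in> (SIGMA W:p. carrier (sect F W))"
    then obtain W v where "x = (W, v)" "W \<in> p" "v \<in> carrier (sect F W)" by blast
    then show "(x, x) \<in> germ_rel p" by (auto simp: germ_rel_iff)
  qed
  show "sym (germ_rel p)"
  proof (rule symI)
    fix x y assume xy: "(x, y) \<in> germ_rel p"
    obtain W v W' v' where xy_eq: "x = (W, v)" "y = (W', v')" by (cases x, cases y)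
    obtain Z where "W \<in> p" "W' \<in> p" "v \<in> carrier (sect F W)" "v' \<in> carrier (sect F W')"
      "Z \<in> p" "Z \<subseteq> W \<inter> W'" "rest F W Z v = rest F W' Z v'"
      using xy unfolding xy_eq germ_rel_iff by blast
    then show "(y, x) \<in> germ_rel p" unfolding xy_eq germ_rel_iff by (intro conjI bexI[of _ Z]) auto
  qed
  show "trans (germ_rel p)"
  proof (rule transI)
    fix x y z assume "(x, y) \<in> germ_rel p" "(y, z) \<in> germ_rel p"
    moreover obtain W1 v1 W2 v2 W3 v3 where "x = (W1, v1)" "y = (W2, v2)" "z = (W3, v3)"
      by (cases x, cases y, cases z)
    ultimately show "(x, z) \<in> germ_rel p" using germ_rel_trans[OF p] by simp
  qed
qed

lemma germ_eq_iff:
  assumes "lattice_filter T p" "W \<in> p" "W' \<in> p" "v \<in> carrier (sect F W)" "v' \<in> carrier (sect F W')"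
  shows "germ p W v = germ p W' v' \<longleftrightarrow> (\<exists>Z\<in>p. Z \<subseteq> W \<inter> W' \<and> rest F W Z v = rest F W' Z v')"
proof -
  have "germ p W v = germ p W' v' \<longleftrightarrow> ((W, v), (W', v')) \<in> germ_rel p"
    unfolding germ_def by (rule eq_equiv_class_iff[OF equiv_germ_rel[OF assms(1)]]) (use assms in auto)
  also have "\<dots> \<longleftrightarrow> (\<exists>Z\<in>p. Z \<subseteq> W \<inter> W' \<and> rest F W Z v = rest F W' Z v')"
    using assms unfolding germ_rel_def by simp
  finally show ?thesis .
qed

lemma germ_rest:
  assumes p: "lattice_filter T p" and "W \<in> p" "Z \<in> p" "Z \<subseteq> W" "v \<in> carrier (sect F W)"
  shows "germ p Z (rest F W Z v) = germ p W v"
proof -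
  have T: "W \<in> T" "Z \<in> T" using assms lattice_filterD(1)[OF p] by auto
  have "rest F W Z v \<in> carrier (sect F Z)" using rest_closed[OF T(2,1)] assms by blast
  then show ?thesis
    using germ_eq_iff[OF p assms(3,2)] rest_id[OF T(2)] assms by auto
qed

definition commutes_with_rest :: "('a set \<Rightarrow> 'v \<Rightarrow> 'v \<Rightarrow> 'v) \<Rightarrow> bool" where
  "commutes_with_rest op \<longleftrightarrow>
     (\<forall>W\<in>T. \<forall>v\<in>carrier (sect F W). \<forall>w\<in>carrier (sect F W). op W v w \<in> carrier (sect F W)) \<and>
     (\<forall>Z\<in>T. \<forall>W\<in>T. Z \<subseteq> W \<longrightarrow> (\<forall>v\<in>carrier (sect F W). \<forall>w\<in>carrier (sect F W).
        rest F W Z (op W v w) = op Z (rest F W Z v) (rest F W Z w)))"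

lemma commutes_with_restD:
  assumes "commutes_with_rest op"
  shows "W \<in> T \<Longrightarrow> v \<in> carrier (sect F W) \<Longrightarrow> w \<in> carrier (sect F W) \<Longrightarrow> op W v w \<in> carrier (sect F W)"
    and "Z \<in> T \<Longrightarrow> W \<in> T \<Longrightarrow> Z \<subseteq> W \<Longrightarrow> v \<in> carrier (sect F W) \<Longrightarrow> w \<in> carrier (sect F W) \<Longrightarrow>
      rest F W Z (op W v w) = op Z (rest F W Z v) (rest F W Z w)"
  using assms unfolding commutes_with_rest_def by blast+

text \<open>Any two germs at a filter have representatives over a common member of it, so an operation on
  sections that commutes with restriction descends to germs.\<close>

definition germ_lift ::
    "'a set set \<Rightarrow> ('a set \<Rightarrow> 'v \<Rightarrow> 'v \<Rightarrow> 'v) \<Rightarrow> ('a set \<times> 'v) set \<Rightarrow> ('a set \<times> 'v) set \<Rightarrow> ('a set \<times> 'v) set" where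
  "germ_lift p op g h = (THE k. \<exists>W\<in>p. \<exists>v\<in>carrier (sect F W). \<exists>w\<in>carrier (sect F W).
      g = germ p W v \<and> h = germ p W w \<and> k = germ p W (op W v w))"

lemma germ_lift_germ:
  assumes p: "lattice_filter T p" and op: "commutes_with_rest op"
    and W: "W \<in> p" and v: "v \<in> carrier (sect F W)" and w: "w \<in> carrier (sect F W)"
  shows "germ_lift p op (germ p W v) (germ p W w) = germ p W (op W v w)"
  unfolding germ_lift_def
proof (rule the_equality)
  show "\<exists>W'\<in>p. \<exists>v'\<in>carrier (sect F W'). \<exists>w'\<in>carrier (sect F W').
      germ p W v = germ p W' v' \<and> germ p W w = germ p W' w' \<and> germ p W (op W v w) = germ p W' (op W' v' w')"
    using W v w by auto
next
  fix k assume "\<exists>W'\<in>p. \<exists>v'\<in>carrier (sect F W'). \<exists>w'\<in>carrier (sect F W').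
      germ p W v = germ p W' v' \<and> germ p W w = germ p W' w' \<and> k = germ p W' (op W' v' w')"
  then obtain W' v' w' where W': "W' \<in> p" "v' \<in> carrier (sect F W')" "w' \<in> carrier (sect F W')"
    and eq: "germ p W v = germ p W' v'" "germ p W w = germ p W' w'" and k: "k = germ p W' (op W' v' w')"
    by blast
  obtain Z1 where Z1: "Z1 \<in> p" "Z1 \<subseteq> W \<inter> W'" "rest F W Z1 v = rest F W' Z1 v'"
    using eq(1) germ_eq_iff[OF p W W'(1) v W'(2)] by blast
  obtain Z2 where Z2: "Z2 \<in> p" "Z2 \<subseteq> W \<inter> W'" "rest F W Z2 w = rest F W' Z2 w'"
    using eq(2) germ_eq_iff[OF p W W'(1) w W'(3)] by blast
  define Z where "Z = Z1 \<inter> Z2"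
  have Zp: "Z \<in> p" unfolding Z_def using lattice_filterD(3)[OF p Z1(1) Z2(1)] .
  have T: "Z \<in> T" "Z1 \<in> T" "Z2 \<in> T" "W \<in> T" "W' \<in> T"
    using Zp Z1(1) Z2(1) W W'(1) lattice_filterD(1)[OF p] by auto
  have ZW: "Z \<subseteq> W" "Z \<subseteq> W'" using Z1(2) unfolding Z_def by auto
  have "rest F W Z v = rest F W' Z v'"
    by (rule rest_eq_mono[OF T(1,2,4,5) _ _ _ v W'(2) Z1(3)]) (use Z1(2) in \<open>auto simp: Z_def\<close>)
  moreover have "rest F W Z w = rest F W' Z w'"
    by (rule rest_eq_mono[OF T(1,3,4,5) _ _ _ w W'(3) Z2(3)]) (use Z2(2) in \<open>auto simp: Z_def\<close>)
  ultimately have agree: "rest F W' Z (op W' v' w') = rest F W Z (op W v w)"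
    using commutes_with_restD(2)[OF op T(1,4) ZW(1) v w] commutes_with_restD(2)[OF op T(1,5) ZW(2) W'(2,3)]
    by simp
  have "op W v w \<in> carrier (sect F W)" "op W' v' w' \<in> carrier (sect F W')"
    using commutes_with_restD(1)[OF op] T(4,5) v w W'(2,3) by blast+
  moreover have "Z \<subseteq> W' \<inter> W" using ZW by blast
  ultimately have "germ p W' (op W' v' w') = germ p W (op W v w)"
    using germ_eq_iff[OF p W'(1) W] Zp agree by blast
  then show "k = germ p W (op W v w)" unfolding k .
qed

text \<open>Scalar multiplication is lifted as a binary operation ignoring its second argument.\<close>

definition stalk :: "'a set set \<Rightarrow> ('k, ('a set \<times> 'v) set) module" where
  "stalk p =
     \<lparr>carrier = (SIGMA W:p. carrier (sect F W)) // germ_rel p, mult = (\<lambda>g h. undefined), one = undefined,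
      zero = germ p (SOME W. W \<in> p) \<zero>\<^bsub>sect F (SOME W. W \<in> p)\<^esub>,
      add = germ_lift p (\<lambda>W v w. v \<oplus>\<^bsub>sect F W\<^esub> w),
      smult = (\<lambda>a g. germ_lift p (\<lambda>W v w. a \<odot>\<^bsub>sect F W\<^esub> v) g g)\<rparr>"

lemma stalk_carrier: "carrier (stalk p) = (SIGMA W:p. carrier (sect F W)) // germ_rel p"
  unfolding stalk_def by simp

lemma germ_in_stalk: "W \<in> p \<Longrightarrow> v \<in> carrier (sect F W) \<Longrightarrow> germ p W v \<in> carrier (stalk p)"
  unfolding stalk_carrier germ_def by (rule quotientI) blast

lemma stalk_elem_germ:
  assumes "g \<in> carrier (stalk p)"
  obtains W v where "W \<in> p" "v \<in> carrier (sect F W)" "g = germ p W v"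
  using assms unfolding stalk_carrier germ_def by (auto elim!: quotientE)

lemma stalk_common_germ:
  assumes p: "lattice_filter T p"
    and g: "g1 \<in> carrier (stalk p)" "g2 \<in> carrier (stalk p)" "g3 \<in> carrier (stalk p)"
  obtains W v1 v2 v3 where "W \<in> p" "v1 \<in> carrier (sect F W)" "v2 \<in> carrier (sect F W)" "v3 \<in> carrier (sect F W)"
    "g1 = germ p W v1" "g2 = germ p W v2" "g3 = germ p W v3"
proof -
  obtain W1 u1 where 1: "W1 \<in> p" "u1 \<in> carrier (sect F W1)" "g1 = germ p W1 u1"
    using g(1) by (rule stalk_elem_germ)
  obtain W2 u2 where 2: "W2 \<in> p" "u2 \<in> carrier (sect F W2)" "g2 = germ p W2 u2"
    using g(2) by (rule stalk_elem_germ)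
  obtain W3 u3 where 3: "W3 \<in> p" "u3 \<in> carrier (sect F W3)" "g3 = germ p W3 u3"
    using g(3) by (rule stalk_elem_germ)
  define W where "W = W1 \<inter> W2 \<inter> W3"
  have Wp: "W \<in> p" unfolding W_def using lattice_filterD(3)[OF p lattice_filterD(3)[OF p 1(1) 2(1)] 3(1)] .
  have T: "W \<in> T" "W1 \<in> T" "W2 \<in> T" "W3 \<in> T"
    using Wp 1(1) 2(1) 3(1) lattice_filterD(1)[OF p] by auto
  have sub: "W \<subseteq> W1" "W \<subseteq> W2" "W \<subseteq> W3" unfolding W_def by auto
  show thesis
  proof (rule that[OF Wp rest_closed[OF T(1,2) sub(1) 1(2)] rest_closed[OF T(1,3) sub(2) 2(2)]
        rest_closed[OF T(1,4) sub(3) 3(2)]])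
    show "g1 = germ p W (rest F W1 W u1)" using germ_rest[OF p 1(1) Wp sub(1) 1(2)] 1(3) by simp
    show "g2 = germ p W (rest F W2 W u2)" using germ_rest[OF p 2(1) Wp sub(2) 2(2)] 2(3) by simp
    show "g3 = germ p W (rest F W3 W u3)" using germ_rest[OF p 3(1) Wp sub(3) 3(2)] 3(3) by simp
  qed
qed

lemma stalk_common_germ2:
  assumes p: "lattice_filter T p" and g: "g1 \<in> carrier (stalk p)" "g2 \<in> carrier (stalk p)"
  obtains W v1 v2 where "W \<in> p" "v1 \<in> carrier (sect F W)" "v2 \<in> carrier (sect F W)"
    "g1 = germ p W v1" "g2 = germ p W v2"
proof -
  obtain W v1 v2 v3 where "W \<in> p" "v1 \<in> carrier (sect F W)" "v2 \<in> carrier (sect F W)"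
    "v3 \<in> carrier (sect F W)" "g1 = germ p W v1" "g2 = germ p W v2" "g2 = germ p W v3"
    by (rule stalk_common_germ[OF p g g(2)])
  then show thesis using that by blast
qed

lemma commutes_with_rest_add: "commutes_with_rest (\<lambda>W v w. v \<oplus>\<^bsub>sect F W\<^esub> w)"
  unfolding commutes_with_rest_def
  using rest_add rest_closed sect_add_closed by auto

lemma commutes_with_rest_smult:
  "a \<in> carrier K \<Longrightarrow> commutes_with_rest (\<lambda>W v w. a \<odot>\<^bsub>sect F W\<^esub> v)"
  unfolding commutes_with_rest_def using rest_smult module.smult_closed[OF sect_module] by auto

lemma stalk_add_germ:
  assumes "lattice_filter T p" "W \<in> p" "v \<in> carrier (sect F W)" "w \<in> carrier (sect F W)"
  shows "germ p W v \<oplus>\<^bsub>stalk p\<^esub> germ p W w = germ p W (v \<oplus>\<^bsub>sect F W\<^esub> w)"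
  unfolding stalk_def using germ_lift_germ[OF assms(1) commutes_with_rest_add assms(2-4)] by simp

lemma stalk_smult_germ:
  assumes "lattice_filter T p" "a \<in> carrier K" "W \<in> p" "v \<in> carrier (sect F W)"
  shows "a \<odot>\<^bsub>stalk p\<^esub> germ p W v = germ p W (a \<odot>\<^bsub>sect F W\<^esub> v)"
  unfolding stalk_def using germ_lift_germ[OF assms(1) commutes_with_rest_smult[OF assms(2)] assms(3,4,4)] by simp

lemma stalk_zero_germ:
  assumes p: "lattice_filter T p" and W: "W \<in> p"
  shows "\<zero>\<^bsub>stalk p\<^esub> = germ p W \<zero>\<^bsub>sect F W\<^esub>"
proof -
  define W0 where "W0 = (SOME W. W \<in> p)"
  have W0: "W0 \<in> p" unfolding W0_def using W by (rule someI)
  have Z: "W0 \<inter> W \<in> p" using lattice_filterD(3)[OF p W0 W] .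
  have T: "W0 \<inter> W \<in> T" "W0 \<in> T" "W \<in> T" using Z W0 W lattice_filterD(1)[OF p] by auto
  have "germ p W0 \<zero>\<^bsub>sect F W0\<^esub> = germ p (W0 \<inter> W) \<zero>\<^bsub>sect F (W0 \<inter> W)\<^esub>"
    using germ_rest[OF p W0 Z _ sect_zero_closed[OF T(2)]] rest_zero[OF T(1,2)] by simp
  also have "\<dots> = germ p W \<zero>\<^bsub>sect F W\<^esub>"
    using germ_rest[OF p W Z _ sect_zero_closed[OF T(3)]] rest_zero[OF T(1,3)] by simp
  finally show ?thesis unfolding stalk_def W0_def by simp
qed

lemma sect_module_at: "lattice_filter T p \<Longrightarrow> W \<in> p \<Longrightarrow> module K (sect F W)"
  using sect_module lattice_filterD(1) by blast

lemma abelian_group_stalk: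
  assumes p: "lattice_filter T p" and ne: "p \<noteq> {}"
  shows "abelian_group (stalk p)"
proof (rule abelian_groupI)
  fix x y assume "x \<in> carrier (stalk p)" "y \<in> carrier (stalk p)"
  then obtain W a b where W: "W \<in> p" and ab: "a \<in> carrier (sect F W)" "b \<in> carrier (sect F W)"
    "x = germ p W a" "y = germ p W b" by (rule stalk_common_germ2[OF p])
  interpret module K "sect F W" using sect_module_at[OF p W] .
  show "x \<oplus>\<^bsub>stalk p\<^esub> y \<in> carrier (stalk p)" "x \<oplus>\<^bsub>stalk p\<^esub> y = y \<oplus>\<^bsub>stalk p\<^esub> x"
    using ab W stalk_add_germ[OF p] germ_in_stalk by (simp_all add: a_comm)
next
  obtain W where W: "W \<in> p" using ne by blast
  interpret module K "sect F W" using sect_module_at[OF p W] .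
  show "\<zero>\<^bsub>stalk p\<^esub> \<in> carrier (stalk p)" using stalk_zero_germ[OF p] germ_in_stalk W by simp
next
  fix x y z assume "x \<in> carrier (stalk p)" "y \<in> carrier (stalk p)" "z \<in> carrier (stalk p)"
  then obtain W a b c where W: "W \<in> p" and abc: "a \<in> carrier (sect F W)" "b \<in> carrier (sect F W)"
    "c \<in> carrier (sect F W)" "x = germ p W a" "y = germ p W b" "z = germ p W c"
    by (rule stalk_common_germ[OF p])
  interpret module K "sect F W" using sect_module_at[OF p W] .
  show "x \<oplus>\<^bsub>stalk p\<^esub> y \<oplus>\<^bsub>stalk p\<^esub> z = x \<oplus>\<^bsub>stalk p\<^esub> (y \<oplus>\<^bsub>stalk p\<^esub> z)"
    using abc W stalk_add_germ[OF p] by (simp add: a_assoc)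
next
  fix x assume "x \<in> carrier (stalk p)"
  then obtain W a where W: "W \<in> p" and a: "a \<in> carrier (sect F W)" "x = germ p W a"
    by (rule stalk_elem_germ)
  interpret module K "sect F W" using sect_module_at[OF p W] .
  show "\<zero>\<^bsub>stalk p\<^esub> \<oplus>\<^bsub>stalk p\<^esub> x = x" using a W stalk_add_germ[OF p] stalk_zero_germ[OF p] by simp
  have "germ p W (\<ominus>\<^bsub>sect F W\<^esub> a) \<oplus>\<^bsub>stalk p\<^esub> x = \<zero>\<^bsub>stalk p\<^esub>"
    using a W stalk_add_germ[OF p] stalk_zero_germ[OF p] by (simp add: l_neg)
  then show "\<exists>y\<in>carrier (stalk p). y \<oplus>\<^bsub>stalk p\<^esub> x = \<zero>\<^bsub>stalk p\<^esub>"
    using germ_in_stalk[OF W] a by blast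
qed

lemma module_stalk:
  assumes p: "lattice_filter T p" and ne: "p \<noteq> {}"
  shows "module K (stalk p)"
proof (rule moduleI[OF cring_K abelian_group_stalk[OF p ne]])
  fix a x assume a: "a \<in> carrier K" and "x \<in> carrier (stalk p)"
  then obtain W v where W: "W \<in> p" and v: "v \<in> carrier (sect F W)" "x = germ p W v"
    by (blast elim: stalk_elem_germ)
  interpret module K "sect F W" using sect_module_at[OF p W] .
  show "a \<odot>\<^bsub>stalk p\<^esub> x \<in> carrier (stalk p)"
    using a v W stalk_smult_germ[OF p] germ_in_stalk by simp
next
  fix a b x assume ab: "a \<in> carrier K" "b \<in> carrier K" and "x \<in> carrier (stalk p)"
  then obtain W v where W: "W \<in> p" and v: "v \<in> carrier (sect F W)" "x = germ p W v"
    by (blast elim: stalk_elem_germ)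
  interpret module K "sect F W" using sect_module_at[OF p W] .
  show "(a \<oplus>\<^bsub>K\<^esub> b) \<odot>\<^bsub>stalk p\<^esub> x = a \<odot>\<^bsub>stalk p\<^esub> x \<oplus>\<^bsub>stalk p\<^esub> b \<odot>\<^bsub>stalk p\<^esub> x"
    and "(a \<otimes>\<^bsub>K\<^esub> b) \<odot>\<^bsub>stalk p\<^esub> x = a \<odot>\<^bsub>stalk p\<^esub> (b \<odot>\<^bsub>stalk p\<^esub> x)"
    using ab v W stalk_add_germ[OF p] stalk_smult_germ[OF p] by (simp_all add: smult_l_distr smult_assoc1)
next
  fix a x y assume a: "a \<in> carrier K" and "x \<in> carrier (stalk p)" "y \<in> carrier (stalk p)"
  then obtain W u v where W: "W \<in> p" and uv: "u \<in> carrier (sect F W)" "v \<in> carrier (sect F W)"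
    "x = germ p W u" "y = germ p W v" by (blast elim: stalk_common_germ2[OF p])
  interpret module K "sect F W" using sect_module_at[OF p W] .
  show "a \<odot>\<^bsub>stalk p\<^esub> (x \<oplus>\<^bsub>stalk p\<^esub> y) = a \<odot>\<^bsub>stalk p\<^esub> x \<oplus>\<^bsub>stalk p\<^esub> a \<odot>\<^bsub>stalk p\<^esub> y"
    using a uv W stalk_add_germ[OF p] stalk_smult_germ[OF p] by (simp add: smult_r_distr)
next
  fix x assume "x \<in> carrier (stalk p)"
  then obtain W v where W: "W \<in> p" and v: "v \<in> carrier (sect F W)" "x = germ p W v"
    by (rule stalk_elem_germ)
  interpret module K "sect F W" using sect_module_at[OF p W] .
  show "\<one>\<^bsub>K\<^esub> \<odot>\<^bsub>stalk p\<^esub> x = x" using v W stalk_smult_germ[OF p] by simp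
qed

section \<open>The Godement sheaf\<close>

text \<open>Prime filters of \<open>T\<close> play the role of points.\<close>

definition points :: "'a set \<Rightarrow> 'a set set set" where
  "points U = {p. prime_filter T p \<and> U \<in> p}"

definition godement :: "('a, 'k, 'a set set \<Rightarrow> ('a set \<times> 'v) set) kpsh" where
  "godement = \<lparr>sect = (\<lambda>U. prod_module (points U) stalk), rest = (\<lambda>V U g. restrict g (points U))\<rparr>"

definition germ_map :: "'a set \<Rightarrow> 'v \<Rightarrow> 'a set set \<Rightarrow> ('a set \<times> 'v) set" where
  "germ_map U s = (\<lambda>p\<in>points U. germ p U s)"

lemma pointsD: "p \<in> points U \<Longrightarrow> lattice_filter T p" "p \<in> points U \<Longrightarrow> U \<in> p"
  unfolding points_def using prime_filterD(1) by blast+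

lemma points_mono: "V \<in> T \<Longrightarrow> U \<subseteq> V \<Longrightarrow> points U \<subseteq> points V"
  unfolding points_def using prime_filterD(1) lattice_filterD(2) by blast

lemma points_cover:
  assumes "tcovering T C U" "p \<in> points U"
  obtains W where "W \<in> C" "p \<in> points W"
proof -
  obtain C0 where C0: "C0 \<subseteq> C" "finite C0" "\<Union>C0 = U" and "C \<subseteq> T"
    using assms(1) unfolding tcovering_def by blast
  moreover have "prime_filter T p" "U \<in> p" using assms(2) unfolding points_def by auto
  ultimately obtain W where "W \<in> C0" "W \<in> p" using prime_filter_Union[of p C0] by blast
  then show thesis using that C0(1) \<open>prime_filter T p\<close> unfolding points_def by blast
qed

lemma module_stalk_point: "p \<in> points U \<Longrightarrow> module K (stalk p)"
  using module_stalk pointsD by blast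

lemma godement_simps:
  "sect godement U = prod_module (points U) stalk" "rest godement V U g = restrict g (points U)"
  unfolding godement_def by simp_all

lemma godement_module: "module K (sect godement U)"
  unfolding godement_simps by (rule module_prod_module[OF cring_K module_stalk_point])

lemma godement_rest_klinear:
  assumes "V \<in> T" "U \<subseteq> V"
  shows "klinear K (sect godement V) (sect godement U) (rest godement V U)"
  using points_mono[OF assms]
  unfolding klinear_def godement_simps prod_module_simps by (auto simp: fun_eq_iff PiE_iff)

lemma godement_rest_rest:
  assumes "V \<in> T" "W \<in> T" "U \<subseteq> V" "V \<subseteq> W"
  shows "rest godement V U (rest godement W V s) = rest godement W U s"
  using points_mono[OF assms(1,3)] unfolding godement_simps by (simp add: Int_absorb1)

lemma godement_sections_eqI:
  assumes C: "tcovering T C U"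
    and st: "s \<in> carrier (sect godement U)" "t \<in> carrier (sect godement U)"
    and eq: "\<And>W. W \<in> C \<Longrightarrow> rest godement U W s = rest godement U W t"
  shows "s = t"
proof (rule PiE_ext)
  show "s \<in> (\<Pi>\<^sub>E p\<in>points U. carrier (stalk p))" "t \<in> (\<Pi>\<^sub>E p\<in>points U. carrier (stalk p))"
    using st unfolding godement_simps prod_module_simps by blast+
  fix p assume "p \<in> points U"
  obtain W where "W \<in> C" "p \<in> points W" using C \<open>p \<in> points U\<close> by (rule points_cover)
  then show "s p = t p" using fun_cong[OF eq[OF \<open>W \<in> C\<close>], of p] unfolding godement_simps by simp
qed

lemma godement_glue:
  assumes U: "U \<in> T" and C: "tcovering T C U"
    and f: "\<And>W. W \<in> C \<Longrightarrow> f W \<in> carrier (sect godement W)"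
    and compat: "\<And>W1 W2. W1 \<in> C \<Longrightarrow> W2 \<in> C \<Longrightarrow>
      rest godement W1 (W1 \<inter> W2) (f W1) = rest godement W2 (W1 \<inter> W2) (f W2)"
  shows "\<exists>s\<in>carrier (sect godement U). \<forall>W\<in>C. rest godement U W s = f W"
proof -
  have CU: "\<And>W. W \<in> C \<Longrightarrow> W \<subseteq> U" using C unfolding tcovering_def by blast
  define pick where "pick p = (SOME W. W \<in> C \<and> p \<in> points W)" for p
  have pick: "pick p \<in> C" "p \<in> points (pick p)" if pU: "p \<in> points U" for p
  proof -
    obtain W where "W \<in> C" "p \<in> points W" using C pU by (rule points_cover)
    then show "pick p \<in> C" "p \<in> points (pick p)"
      unfolding pick_def by (metis (mono_tags, lifting) someI)+
  qed
  have agree: "f W1 p = f W2 p" if "W1 \<in> C" "W2 \<in> C" "p \<in> points W1" "p \<in> points W2" for W1 W2 p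
  proof -
    have "p \<in> points (W1 \<inter> W2)"
      using that prime_filterD(1) lattice_filterD(3) unfolding points_def by blast
    then show ?thesis using fun_cong[OF compat[OF that(1,2)], of p] unfolding godement_simps by simp
  qed
  have in_carrier: "f W p \<in> carrier (stalk p)" if "W \<in> C" "p \<in> points W" for W p
    using f[OF that(1)] that(2) unfolding godement_simps prod_module_simps by blast
  have out: "f W p = undefined" if "W \<in> C" "p \<notin> points W" for W p
    using f[OF that(1)] that(2) unfolding godement_simps prod_module_simps by blast
  define s where "s = (\<lambda>p\<in>points U. f (pick p) p)"
  have "s \<in> carrier (sect godement U)"
    unfolding s_def godement_simps prod_module_simps using pick in_carrier by simp
  moreover have "rest godement U W s = f W" if W: "W \<in> C" for W
  proof
    fix p show "rest godement U W s p = f W p"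
    proof (cases "p \<in> points W")
      case True
      then have "p \<in> points U" using points_mono[OF U CU[OF W]] by blast
      then show ?thesis unfolding s_def godement_simps using True agree[OF pick(1) W pick(2)] by simp
    next
      case False
      then show ?thesis unfolding godement_simps using out[OF W] by simp
    qed
  qed
  ultimately show ?thesis by blast
qed

lemma godement_sheaf: "is_ksheaf K T godement"
  unfolding is_ksheaf_def
proof (intro conjI ballI allI impI)
  fix U show "module K (sect godement U)" by (rule godement_module)
next
  fix U V assume "U \<in> T" "V \<in> T" "U \<subseteq> V"
  then show "klinear K (sect godement V) (sect godement U) (rest godement V U)"
    by (intro godement_rest_klinear)
next
  fix U s assume "s \<in> carrier (sect godement U)"
  then show "rest godement U U s = s" unfolding godement_simps prod_module_simps by simp
next
  fix U V W s assume V: "V \<in> T" and W: "W \<in> T" and UVW: "U \<subseteq> V \<and> V \<subseteq> W"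
  show "rest godement V U (rest godement W V s) = rest godement W U s"
    using godement_rest_rest[OF V W conjunct1[OF UVW] conjunct2[OF UVW]] .
next
  fix U C s t assume C: "tcovering T C U" and st: "s \<in> carrier (sect godement U)" "t \<in> carrier (sect godement U)"
    and eq: "\<forall>W\<in>C. rest godement U W s = rest godement U W t"
  show "s = t" by (rule godement_sections_eqI[OF C st]) (use eq in blast)
next
  fix U C f assume U: "U \<in> T" and C: "tcovering T C U" and hyp: "(\<forall>W\<in>C. f W \<in> carrier (sect godement W)) \<and>
      (\<forall>W1\<in>C. \<forall>W2\<in>C. rest godement W1 (W1 \<inter> W2) (f W1) = rest godement W2 (W1 \<inter> W2) (f W2))"
  show "\<exists>s\<in>carrier (sect godement U). \<forall>W\<in>C. rest godement U W s = f W"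
    by (rule godement_glue[OF U C]) (use hyp in blast)+
qed

text \<open>Sections over \<open>U\<close> extend by zero at the points of \<open>V\<close> outside \<open>U\<close>.\<close>
lemma godement_flabby: "tflabby T godement"
  unfolding tflabby_def
proof (intro ballI impI equalityI subsetI)
  fix U V g assume "U \<in> T" "V \<in> T" "U \<subseteq> V" "g \<in> rest godement V U ` carrier (sect godement V)"
  then show "g \<in> carrier (sect godement U)"
    using klinear_closed[OF godement_rest_klinear] by blast
next
  fix U V g assume V: "V \<in> T" and UV: "U \<subseteq> V" and g: "g \<in> carrier (sect godement U)"
  define h where "h = (\<lambda>p\<in>points V. if p \<in> points U then g p else germ p V \<zero>\<^bsub>sect F V\<^esub>)"
  have "germ p V \<zero>\<^bsub>sect F V\<^esub> \<in> carrier (stalk p)" if "p \<in> points V" for p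
    using germ_in_stalk[OF pointsD(2)[OF that] sect_zero_closed[OF V]] .
  then have "h \<in> carrier (sect godement V)"
    using g unfolding h_def godement_simps prod_module_simps by (auto simp: PiE_iff)
  moreover have "rest godement V U h = g"
    using g points_mono[OF V UV] unfolding h_def godement_simps prod_module_simps
    by (auto simp: fun_eq_iff PiE_iff extensional_def)
  ultimately show "g \<in> rest godement V U ` carrier (sect godement V)" by blast
qed

lemma germ_map_klinear:
  assumes U: "U \<in> T"
  shows "klinear K (sect F U) (sect godement U) (germ_map U)"
  unfolding klinear_def
proof (intro conjI ballI)
  fix s assume s: "s \<in> carrier (sect F U)"
  then show "germ_map U s \<in> carrier (sect godement U)"
    unfolding germ_map_def godement_simps prod_module_simps using germ_in_stalk pointsD(2) by simp
  fix t assume t: "t \<in> carrier (sect F U)"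
  show "germ_map U (s \<oplus>\<^bsub>sect F U\<^esub> t) = germ_map U s \<oplus>\<^bsub>sect godement U\<^esub> germ_map U t"
    unfolding germ_map_def godement_simps prod_module_simps
    using stalk_add_germ[OF pointsD(1) pointsD(2) s t] by (simp add: fun_eq_iff)
next
  fix a s assume a: "a \<in> carrier K" and s: "s \<in> carrier (sect F U)"
  show "germ_map U (a \<odot>\<^bsub>sect F U\<^esub> s) = a \<odot>\<^bsub>sect godement U\<^esub> germ_map U s"
    unfolding germ_map_def godement_simps prod_module_simps
    using stalk_smult_germ[OF pointsD(1) a pointsD(2) s] by (simp add: fun_eq_iff)
qed

lemma germ_map_rest:
  assumes "U \<in> T" "V \<in> T" "U \<subseteq> V" "s \<in> carrier (sect F V)"
  shows "germ_map U (rest F V U s) = rest godement V U (germ_map V s)"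
proof
  fix p
  have "germ p U (rest F V U s) = germ p V s" if "p \<in> points U"
    using germ_rest[OF pointsD(1) _ pointsD(2) assms(3,4), OF that _ that] points_mono[OF assms(2,3)]
      pointsD(2) that by blast
  then show "germ_map U (rest F V U s) p = rest godement V U (germ_map V s) p"
    unfolding germ_map_def godement_simps using points_mono[OF assms(2,3)] by auto
qed

lemma agreement_ideal:
  assumes U: "U \<in> T" and s: "s \<in> carrier (sect F U)" and t: "t \<in> carrier (sect F U)"
  shows "lattice_ideal T {V \<in> T. V \<subseteq> U \<and> rest F U V s = rest F U V t}" (is "lattice_ideal T ?I")
  unfolding lattice_ideal_def
proof (intro conjI ballI impI)
  show "?I \<subseteq> T" by blast
  show "{} \<in> ?I"
    using empty_mem sections_empty_unique[OF rest_closed[OF empty_mem U _ s] rest_closed[OF empty_mem U _ t]]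
    by blast
next
  fix A B assume "A \<in> ?I" "B \<in> T" "B \<subseteq> A"
  then show "B \<in> ?I" using rest_rest[of B A U s] rest_rest[of B A U t] U s t by auto
next
  fix A B assume A: "A \<in> ?I" and B: "B \<in> ?I"
  then have T: "A \<in> T" "B \<in> T" "A \<union> B \<in> T" "A \<union> B \<subseteq> U" using Un_mem by auto
  have "rest F U (A \<union> B) s = rest F U (A \<union> B) t"
  proof (rule sections_eq_pairI[OF T(1,2) rest_closed[OF T(3) U T(4) s] rest_closed[OF T(3) U T(4) t]])
    show "rest F (A \<union> B) A (rest F U (A \<union> B) s) = rest F (A \<union> B) A (rest F U (A \<union> B) t)"
      using rest_rest[OF T(1,3) U _ T(4)] A s t by auto
    show "rest F (A \<union> B) B (rest F U (A \<union> B) s) = rest F (A \<union> B) B (rest F U (A \<union> B) t)"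
      using rest_rest[OF T(2,3) U _ T(4)] B s t by auto
  qed
  then show "A \<union> B \<in> ?I" using T by blast
qed

lemma germ_map_inj:
  assumes U: "U \<in> T"
  shows "inj_on (germ_map U) (carrier (sect F U))"
proof (rule inj_onI, rule ccontr)
  fix s t assume s: "s \<in> carrier (sect F U)" and t: "t \<in> carrier (sect F U)"
    and eq: "germ_map U s = germ_map U t" and "s \<noteq> t"
  let ?I = "{V \<in> T. V \<subseteq> U \<and> rest F U V s = rest F U V t}"
  have "U \<notin> ?I" using rest_id[OF U s] rest_id[OF U t] \<open>s \<noteq> t\<close> by auto
  then obtain p where p: "prime_filter T p" "U \<in> p" "p \<inter> ?I = {}"
    using prime_filter_separates[OF U agreement_ideal[OF U s t]] by blast
  then have "p \<in> points U" unfolding points_def by blast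
  then have "germ p U s = germ p U t" using fun_cong[OF eq, of p] unfolding germ_map_def by simp
  then obtain Z where "Z \<in> p" "Z \<subseteq> U" "rest F U Z s = rest F U Z t"
    using germ_eq_iff[OF pointsD(1)[OF \<open>p \<in> points U\<close>] p(2) p(2) s t] by auto
  moreover have "Z \<in> T" using \<open>Z \<in> p\<close> prime_filterD(1)[OF p(1)] lattice_filterD(1) by blast
  ultimately show False using p(3) by blast
qed

lemma germ_map_kmono: "is_kmono K T F godement germ_map"
  unfolding is_kmono_def is_kmor_def
  using germ_map_klinear germ_map_rest germ_map_inj by blast

end

section \<open>Short exact sequences with flabby kernel\<close>

lemma is_kmorD:
  assumes "is_kmor K T F G \<phi>"
  shows "U \<in> T \<Longrightarrow> klinear K (sect F U) (sect G U) (\<phi> U)"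
    and "U \<in> T \<Longrightarrow> V \<in> T \<Longrightarrow> U \<subseteq> V \<Longrightarrow> s \<in> carrier (sect F V) \<Longrightarrow>
      \<phi> U (rest F V U s) = rest G V U (\<phi> V s)"
  using assms unfolding is_kmor_def by blast+

lemma short_exactD:
  assumes "short_exact K T F1 F2 F3 \<phi> \<psi>"
  shows "is_ksheaf K T F1" "is_ksheaf K T F2" "is_ksheaf K T F3"
    and "is_kmor K T F1 F2 \<phi>" "is_kmor K T F2 F3 \<psi>"
    and "U \<in> T \<Longrightarrow> inj_on (\<phi> U) (carrier (sect F1 U))"
    and "U \<in> T \<Longrightarrow> {s \<in> carrier (sect F2 U). \<psi> U s = \<zero>\<^bsub>sect F3 U\<^esub>} = \<phi> U ` carrier (sect F1 U)"
    and "U \<in> T \<Longrightarrow> t \<in> carrier (sect F3 U) \<Longrightarrow>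
      \<exists>C. tcovering T C U \<and> (\<forall>W\<in>C. \<exists>s\<in>carrier (sect F2 W). \<psi> W s = rest F3 U W t)"
  using assms unfolding short_exact_def by (elim conjE; simp only: Ball_def)+

locale flabby_kernel_exact = set_lattice T for T :: "'a set set" +
  fixes K :: "'k ring" and F1 :: "('a, 'k, 'v1) kpsh" and F2 :: "('a, 'k, 'v2) kpsh"
    and F3 :: "('a, 'k, 'v3) kpsh" and \<phi> :: "'a set \<Rightarrow> 'v1 \<Rightarrow> 'v2" and \<psi> :: "'a set \<Rightarrow> 'v2 \<Rightarrow> 'v3"
  assumes exact: "short_exact K T F1 F2 F3 \<phi> \<psi>" and flabby1: "tflabby T F1"
begin

lemmas sheaf1 = short_exactD(1)[OF exact]
  and sheaf2 = short_exactD(2)[OF exact]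
  and sheaf3 = short_exactD(3)[OF exact]
  and \<phi>_kmor = short_exactD(4)[OF exact]
  and \<psi>_kmor = short_exactD(5)[OF exact]
  and \<phi>_inj = short_exactD(6)[OF exact]
  and ker_\<psi>_eq_im_\<phi> = short_exactD(7)[OF exact]
  and \<psi>_locally_surjective = short_exactD(8)[OF exact]

sublocale S1: ksheaf T K F1 by unfold_locales (rule sheaf1)
sublocale S2: ksheaf T K F2 by unfold_locales (rule sheaf2)
sublocale S3: ksheaf T K F3 by unfold_locales (rule sheaf3)

lemma \<phi>_klinear: "U \<in> T \<Longrightarrow> klinear K (sect F1 U) (sect F2 U) (\<phi> U)"
  by (rule is_kmorD(1)[OF \<phi>_kmor])

lemma \<psi>_klinear: "U \<in> T \<Longrightarrow> klinear K (sect F2 U) (sect F3 U) (\<psi> U)"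
  by (rule is_kmorD(1)[OF \<psi>_kmor])

lemma \<phi>_rest:
  "U \<in> T \<Longrightarrow> V \<in> T \<Longrightarrow> U \<subseteq> V \<Longrightarrow> r \<in> carrier (sect F1 V) \<Longrightarrow> \<phi> U (rest F1 V U r) = rest F2 V U (\<phi> V r)"
  by (rule is_kmorD(2)[OF \<phi>_kmor])

lemma \<psi>_rest:
  "U \<in> T \<Longrightarrow> V \<in> T \<Longrightarrow> U \<subseteq> V \<Longrightarrow> s \<in> carrier (sect F2 V) \<Longrightarrow> \<psi> U (rest F2 V U s) = rest F3 V U (\<psi> V s)"
  by (rule is_kmorD(2)[OF \<psi>_kmor])

lemma flabby1_extend:
  assumes "U \<in> T" "V \<in> T" "U \<subseteq> V" "r \<in> carrier (sect F1 U)"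
  obtains r' where "r' \<in> carrier (sect F1 V)" "rest F1 V U r' = r"
  using flabby1 assms that unfolding S1.tflabby_iff_extend by blast

lemma \<psi>_\<phi>: "U \<in> T \<Longrightarrow> r \<in> carrier (sect F1 U) \<Longrightarrow> \<psi> U (\<phi> U r) = \<zero>\<^bsub>sect F3 U\<^esub>"
  using ker_\<psi>_eq_im_\<phi> by blast

lemma ker_\<psi>_in_im_\<phi>:
  assumes "U \<in> T" "s \<in> carrier (sect F2 U)" "\<psi> U s = \<zero>\<^bsub>sect F3 U\<^esub>"
  obtains r where "r \<in> carrier (sect F1 U)" "s = \<phi> U r"
  using ker_\<psi>_eq_im_\<phi>[OF assms(1)] assms(2,3) that by blast

text \<open>A lift of \<open>\<psi> (s|\<^sub>Y)\<close> may differ from \<open>s|\<^sub>Y\<close> only by a section of \<open>F1\<close> over \<open>Y\<close>; extending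
  that section to \<open>W\<close> (flabbiness of \<open>F1\<close>) and adding it to \<open>s\<close> gives the adjusted lift.\<close>
lemma lift_adjust:
  assumes Y: "Y \<in> T" and W: "W \<in> T" and YW: "Y \<subseteq> W"
    and s: "s \<in> carrier (sect F2 W)" and u: "u \<in> carrier (sect F2 Y)"
    and eq: "\<psi> Y u = \<psi> Y (rest F2 W Y s)"
  obtains s' where "s' \<in> carrier (sect F2 W)" "\<psi> W s' = \<psi> W s" "rest F2 W Y s' = u"
proof -
  interpret MY: module K "sect F2 Y" using S2.sect_module[OF Y] .
  interpret MY3: module K "sect F3 Y" using S3.sect_module[OF Y] .
  interpret MW: module K "sect F2 W" using S2.sect_module[OF W] .
  interpret MW3: module K "sect F3 W" using S3.sect_module[OF W] .
  define sY where "sY = rest F2 W Y s"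
  have sY: "sY \<in> carrier (sect F2 Y)" unfolding sY_def by (rule S2.rest_closed[OF Y W YW s])
  define d where "d = u \<ominus>\<^bsub>sect F2 Y\<^esub> sY"
  have d: "d \<in> carrier (sect F2 Y)" using u sY unfolding d_def by simp
  have "\<psi> Y d = \<psi> Y u \<ominus>\<^bsub>sect F3 Y\<^esub> \<psi> Y sY"
    unfolding d_def by (rule klinear_diff[OF S2.sect_module[OF Y] S3.sect_module[OF Y] \<psi>_klinear[OF Y] u sY])
  also have "\<dots> = \<zero>\<^bsub>sect F3 Y\<^esub>"
    using eq klinear_closed[OF \<psi>_klinear[OF Y] sY] unfolding sY_def by (simp add: a_minus_def MY3.r_neg)
  finally obtain r where r: "r \<in> carrier (sect F1 Y)" "d = \<phi> Y r"
    using ker_\<psi>_in_im_\<phi>[OF Y d] by blast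
  obtain r' where r': "r' \<in> carrier (sect F1 W)" "rest F1 W Y r' = r"
    using flabby1_extend[OF Y W YW r(1)] .
  have \<phi>r': "\<phi> W r' \<in> carrier (sect F2 W)" by (rule klinear_closed[OF \<phi>_klinear[OF W] r'(1)])
  show thesis
  proof (rule that)
    show "s \<oplus>\<^bsub>sect F2 W\<^esub> \<phi> W r' \<in> carrier (sect F2 W)" using s \<phi>r' by simp
    have "\<psi> W (s \<oplus>\<^bsub>sect F2 W\<^esub> \<phi> W r') = \<psi> W s \<oplus>\<^bsub>sect F3 W\<^esub> \<psi> W (\<phi> W r')"
      by (rule klinear_add[OF \<psi>_klinear[OF W] s \<phi>r'])
    then show "\<psi> W (s \<oplus>\<^bsub>sect F2 W\<^esub> \<phi> W r') = \<psi> W s"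
      using \<psi>_\<phi>[OF W r'(1)] klinear_closed[OF \<psi>_klinear[OF W] s] by simp
    have "rest F2 W Y (\<phi> W r') = d" using \<phi>_rest[OF Y W YW r'(1)] r r' by simp
    then have "rest F2 W Y (s \<oplus>\<^bsub>sect F2 W\<^esub> \<phi> W r') = sY \<oplus>\<^bsub>sect F2 Y\<^esub> (u \<oplus>\<^bsub>sect F2 Y\<^esub> \<ominus>\<^bsub>sect F2 Y\<^esub> sY)"
      using S2.rest_add[OF Y W YW s \<phi>r'] unfolding sY_def d_def a_minus_def by simp
    also have "\<dots> = u" using u sY by (simp add: MY.a_comm[of u] MY.r_neg2)
    finally show "rest F2 W Y (s \<oplus>\<^bsub>sect F2 W\<^esub> \<phi> W r') = u" .
  qed
qed

lemma lift_Un: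
  assumes V: "V \<in> T" and W: "W \<in> T" and t: "t \<in> carrier (sect F3 (V \<union> W))"
    and sV: "sV \<in> carrier (sect F2 V)" "\<psi> V sV = rest F3 (V \<union> W) V t"
    and sW: "sW \<in> carrier (sect F2 W)" "\<psi> W sW = rest F3 (V \<union> W) W t"
  obtains s where "s \<in> carrier (sect F2 (V \<union> W))" "\<psi> (V \<union> W) s = t"
proof -
  have Y: "V \<inter> W \<in> T" and VW: "V \<union> W \<in> T" using Int_mem[OF V W] Un_mem[OF V W] .
  have t_rest: "rest F3 (V \<union> W) Z t = rest F3 Z' Z (rest F3 (V \<union> W) Z' t)"
    if "Z \<in> T" "Z' \<in> T" "Z \<subseteq> Z'" "Z' \<subseteq> V \<union> W" for Z Z'
    using S3.rest_rest[OF that(1,2) VW that(3,4) t] by simp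
  have "\<psi> (V \<inter> W) (rest F2 V (V \<inter> W) sV) = \<psi> (V \<inter> W) (rest F2 W (V \<inter> W) sW)"
    using \<psi>_rest[OF Y V _ sV(1)] \<psi>_rest[OF Y W _ sW(1)] sV(2) sW(2) t_rest[OF Y V] t_rest[OF Y W] by simp
  then obtain sW' where sW': "sW' \<in> carrier (sect F2 W)" "\<psi> W sW' = \<psi> W sW"
    "rest F2 W (V \<inter> W) sW' = rest F2 V (V \<inter> W) sV"
    using lift_adjust[OF Y W _ sW(1) S2.rest_closed[OF Y V _ sV(1)]] by auto
  obtain s where s: "s \<in> carrier (sect F2 (V \<union> W))" "rest F2 (V \<union> W) V s = sV" "rest F2 (V \<union> W) W s = sW'"
    using S2.sections_glue_pair[OF V W sV(1) sW'(1) sW'(3)[symmetric]] by blast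
  have "\<psi> (V \<union> W) s = t"
  proof (rule S3.sections_eq_pairI[OF V W klinear_closed[OF \<psi>_klinear[OF VW] s(1)] t])
    show "rest F3 (V \<union> W) V (\<psi> (V \<union> W) s) = rest F3 (V \<union> W) V t"
      using \<psi>_rest[OF V VW _ s(1)] s(2) sV(2) by simp
    show "rest F3 (V \<union> W) W (\<psi> (V \<union> W) s) = rest F3 (V \<union> W) W t"
      using \<psi>_rest[OF W VW _ s(1)] s(3) sW'(2) sW(2) by simp
  qed
  then show thesis using that s(1) by blast
qed

lemma lift_Union:
  assumes U: "U \<in> T" and t: "t \<in> carrier (sect F3 U)" and D: "finite D" "D \<subseteq> T" "\<forall>W\<in>D. W \<subseteq> U"
    and lift: "\<forall>W\<in>D. \<exists>s\<in>carrier (sect F2 W). \<psi> W s = rest F3 U W t"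
  shows "\<exists>s\<in>carrier (sect F2 (\<Union>D)). \<psi> (\<Union>D) s = rest F3 U (\<Union>D) t"
  using D lift
proof (induction D rule: finite_induct)
  case empty
  have "\<psi> {} \<zero>\<^bsub>sect F2 {}\<^esub> = rest F3 U {} t"
    by (rule S3.sections_empty_unique[OF klinear_closed[OF \<psi>_klinear[OF empty_mem] S2.sect_zero_closed[OF empty_mem]]
          S3.rest_closed[OF empty_mem U _ t]]) simp
  then show ?case using S2.sect_zero_closed[OF empty_mem] by auto
next
  case (insert W D)
  have W: "W \<in> T" "W \<subseteq> U" using insert(4,5) by auto
  have D: "\<Union>D \<in> T" "\<Union>D \<subseteq> U" using Union_mem[OF insert(1)] insert(4,5) by auto
  have "\<exists>s\<in>carrier (sect F2 (\<Union>D)). \<psi> (\<Union>D) s = rest F3 U (\<Union>D) t"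
    by (rule insert.IH) (use insert.prems in auto)
  then obtain sD where sD: "sD \<in> carrier (sect F2 (\<Union>D))" "\<psi> (\<Union>D) sD = rest F3 U (\<Union>D) t"
    by blast
  obtain sW where sW: "sW \<in> carrier (sect F2 W)" "\<psi> W sW = rest F3 U W t"
    using insert.prems(3) by blast
  have WD: "W \<union> \<Union>D \<in> T" "W \<union> \<Union>D \<subseteq> U" using Un_mem[OF W(1) D(1)] D(2) W(2) by auto
  have t_rest: "rest F3 (W \<union> \<Union>D) Z (rest F3 U (W \<union> \<Union>D) t) = rest F3 U Z t"
    if "Z \<in> T" "Z \<subseteq> W \<union> \<Union>D" for Z
    using S3.rest_rest[OF that(1) WD(1) U that(2) WD(2) t] .
  obtain s where "s \<in> carrier (sect F2 (W \<union> \<Union>D))" "\<psi> (W \<union> \<Union>D) s = rest F3 U (W \<union> \<Union>D) t"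
  proof (rule lift_Un[OF W(1) D(1) S3.rest_closed[OF WD(1) U WD(2) t] sW(1) _ sD(1)])
    show "\<psi> W sW = rest F3 (W \<union> \<Union>D) W (rest F3 U (W \<union> \<Union>D) t)"
      using sW(2) t_rest[OF W(1)] by simp
    show "\<psi> (\<Union>D) sD = rest F3 (W \<union> \<Union>D) (\<Union>D) (rest F3 U (W \<union> \<Union>D) t)"
      using sD(2) t_rest[OF D(1)] by simp
  qed
  then show ?case by auto
qed

lemma \<psi>_surjective:
  assumes U: "U \<in> T" and t: "t \<in> carrier (sect F3 U)"
  obtains s where "s \<in> carrier (sect F2 U)" "\<psi> U s = t"
proof -
  obtain C where C: "tcovering T C U" and lift: "\<forall>W\<in>C. \<exists>s\<in>carrier (sect F2 W). \<psi> W s = rest F3 U W t"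
    using \<psi>_locally_surjective[OF U t] by blast
  obtain C0 where C0: "C0 \<subseteq> C" "finite C0" "\<Union>C0 = U" using C unfolding tcovering_def by blast
  have C0T: "C0 \<subseteq> T" "\<forall>W\<in>C0. W \<subseteq> U" using C C0(1) unfolding tcovering_def by blast+
  have "\<exists>s\<in>carrier (sect F2 (\<Union>C0)). \<psi> (\<Union>C0) s = rest F3 U (\<Union>C0) t"
    by (rule lift_Union[OF U t C0(2) C0T]) (use lift C0(1) in blast)
  then obtain s where "s \<in> carrier (sect F2 U)" "\<psi> U s = rest F3 U U t"
    unfolding C0(3) by blast
  then show thesis using that S3.rest_id[OF U t] by simp
qed

lemma sections_exact:
  assumes U: "U \<in> T"
  shows "sections_exact F1 F2 F3 \<phi> \<psi> U"
proof -
  have "\<psi> U ` carrier (sect F2 U) = carrier (sect F3 U)"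
  proof
    show "\<psi> U ` carrier (sect F2 U) \<subseteq> carrier (sect F3 U)" using klinear_closed[OF \<psi>_klinear[OF U]] by blast
    show "carrier (sect F3 U) \<subseteq> \<psi> U ` carrier (sect F2 U)"
    proof
      fix t assume "t \<in> carrier (sect F3 U)"
      then obtain s where "s \<in> carrier (sect F2 U)" "\<psi> U s = t" by (rule \<psi>_surjective[OF U])
      then show "t \<in> \<psi> U ` carrier (sect F2 U)" by blast
    qed
  qed
  then show ?thesis unfolding sections_exact_def using \<phi>_inj[OF U] ker_\<psi>_eq_im_\<phi>[OF U] by blast
qed

lemma flabby_quotient_if_flabby_middle:
  assumes "tflabby T F2"
  shows "tflabby T F3"
  unfolding S3.tflabby_iff_extend
proof (intro ballI impI)
  fix U V t assume U: "U \<in> T" and V: "V \<in> T" and UV: "U \<subseteq> V" and t: "t \<in> carrier (sect F3 U)"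
  obtain s where s: "s \<in> carrier (sect F2 U)" "\<psi> U s = t" using \<psi>_surjective[OF U t] .
  obtain s' where s': "s' \<in> carrier (sect F2 V)" "rest F2 V U s' = s"
    using assms U V UV s(1) unfolding S2.tflabby_iff_extend by blast
  have "rest F3 V U (\<psi> V s') = t" using \<psi>_rest[OF U V UV s'(1)] s s'(2) by simp
  then show "\<exists>t'\<in>carrier (sect F3 V). rest F3 V U t' = t"
    using klinear_closed[OF \<psi>_klinear[OF V] s'(1)] by blast
qed

lemma flabby_middle_if_flabby_quotient:
  assumes "tflabby T F3"
  shows "tflabby T F2"
  unfolding S2.tflabby_iff_extend
proof (intro ballI impI)
  fix U V s assume U: "U \<in> T" and V: "V \<in> T" and UV: "U \<subseteq> V" and s: "s \<in> carrier (sect F2 U)"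
  have "\<psi> U s \<in> carrier (sect F3 U)" by (rule klinear_closed[OF \<psi>_klinear[OF U] s])
  then obtain t' where t': "t' \<in> carrier (sect F3 V)" "rest F3 V U t' = \<psi> U s"
    using assms U V UV unfolding S3.tflabby_iff_extend by blast
  obtain s' where s': "s' \<in> carrier (sect F2 V)" "\<psi> V s' = t'" using \<psi>_surjective[OF V t'(1)] .
  have "\<psi> U s = \<psi> U (rest F2 V U s')" using \<psi>_rest[OF U V UV s'(1)] s'(2) t'(2) by simp
  then obtain s'' where "s'' \<in> carrier (sect F2 V)" "rest F2 V U s'' = s"
    using lift_adjust[OF U V UV s'(1) s] by blast
  then show "\<exists>s'\<in>carrier (sect F2 V). rest F2 V U s' = s" by blast
qed

end

lemma tspace_set_lattice: "tspace X T \<Longrightarrow> set_lattice T"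
  unfolding tspace_def by unfold_locales blast+

theorem mainTheorem16:
  fixes K :: "'k ring" and X :: "'a topology" and T :: "'a set set" and U :: "'a set"
  assumes "field K" and "tspace X T" and "U \<in> T"
  shows
    "(\<forall>F :: ('a, 'k, 'v) kpsh. is_ksheaf K T F \<longrightarrow>
        (\<exists>(F' :: ('a, 'k, 'a set set \<Rightarrow> ('a set \<times> 'v) set) kpsh) \<iota>.
            is_ksheaf K T F' \<and> tflabby T F' \<and> is_kmono K T F F' \<iota>))
   \<and> (\<forall>(F1 :: ('a, 'k, 'v1) kpsh) (F2 :: ('a, 'k, 'v2) kpsh) (F3 :: ('a, 'k, 'v3) kpsh) \<phi> \<psi>.
        short_exact K T F1 F2 F3 \<phi> \<psi> \<and> tflabby T F1 \<longrightarrow> sections_exact F1 F2 F3 \<phi> \<psi> U)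
   \<and> (\<forall>(F1 :: ('a, 'k, 'w1) kpsh) (F2 :: ('a, 'k, 'w2) kpsh) (F3 :: ('a, 'k, 'w3) kpsh) \<phi> \<psi>.
        short_exact K T F1 F2 F3 \<phi> \<psi> \<and> tflabby T F1 \<longrightarrow> (tflabby T F2 \<longleftrightarrow> tflabby T F3))"
proof -
  have T: "set_lattice T" using tspace_set_lattice[OF assms(2)] .
  show ?thesis
  proof (intro conjI allI impI)
    fix F :: "('a, 'k, 'v) kpsh" assume "is_ksheaf K T F"
    then interpret ksheaf T K F by (intro ksheaf.intro[OF T] ksheaf_axioms.intro)
    show "\<exists>(F' :: ('a, 'k, 'a set set \<Rightarrow> ('a set \<times> 'v) set) kpsh) \<iota>.
        is_ksheaf K T F' \<and> tflabby T F' \<and> is_kmono K T F F' \<iota>"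
      using godement_sheaf godement_flabby germ_map_kmono by blast
  next
    fix F1 :: "('a, 'k, 'v1) kpsh" and F2 :: "('a, 'k, 'v2) kpsh" and F3 :: "('a, 'k, 'v3) kpsh" and \<phi> \<psi>
    assume "short_exact K T F1 F2 F3 \<phi> \<psi> \<and> tflabby T F1"
    then interpret flabby_kernel_exact T K F1 F2 F3 \<phi> \<psi>
      by (intro flabby_kernel_exact.intro[OF T] flabby_kernel_exact_axioms.intro) auto
    show "sections_exact F1 F2 F3 \<phi> \<psi> U" by (rule sections_exact[OF assms(3)])
  next
    fix F1 :: "('a, 'k, 'w1) kpsh" and F2 :: "('a, 'k, 'w2) kpsh" and F3 :: "('a, 'k, 'w3) kpsh" and \<phi> \<psi>
    assume "short_exact K T F1 F2 F3 \<phi> \<psi> \<and> tflabby T F1"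
    then interpret flabby_kernel_exact T K F1 F2 F3 \<phi> \<psi>
      by (intro flabby_kernel_exact.intro[OF T] flabby_kernel_exact_axioms.intro) auto
    show "tflabby T F2 \<longleftrightarrow> tflabby T F3"
      using flabby_quotient_if_flabby_middle flabby_middle_if_flabby_quotient by blast
  qed
qed

end
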